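(* Let $\Gamma$ and $\tilde\Gamma$ be two generalized cospectral signed bipartite graphs with a common characteristic polynomial $\phi(x)$ that is irreducible over $\mathbb{Q}$. Suppose their adjacency matrices are $$A=A(\Gamma)=\begin{bmatrix} O & M\\ M^{\mathrm T} & O\end{bmatrix},\qquad \tilde A=A(\tilde\Gamma)=\begin{bmatrix} O & \tilde M\\ \tilde M^{\mathrm T} & O\end{bmatrix}.$$ Then there exists a regular orthogonal matrix $Q$ such that $Q^{\mathrm T}AQ=\tilde A$, where $$Q=\begin{bmatrix} Q_1 & O\\ O & Q_2\end{bmatrix}\quad\text{or}\quad Q=\begin{bmatrix} O & Q_1\\ Q_2 & O\end{bmatrix},$$ with $Q_1$ and $Q_2$ regular rational orthogonal matrices.
   Context: A signed graph is a simple graph with each edge assigned a sign $\pm1$; its adjacency matrix has entry equal to the sign of the edge for adjacent vertices and $0$ otherwise. A signed bipartite graph is a signed graph whose underlying graph is bipartite; the vertices are ordered so that the adjacency matrix has the displayed block form. Two signed graphs with adjacency matrices $A,\tilde A$ are generalized cospectral if $\det(xI-A)=\det(xI-\tilde A)$ and $\det(xI-(J-I-A))=\det(xI-(J-I-\tilde A))$, $J$ the all-ones matrix. A square matrix $Q$ is orthogonal if $Q^{\mathrm T}Q=I$, rational if all entries are rational, and regular if $Qe=e$, where $e$ is the all-ones vector. *)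

theory Defs
  imports "Jordan_Normal_Form.Char_Poly" "HOL-Computational_Algebra.Polynomial_Factorial"
begin

text \<open>Adjacency matrix of a signed bipartite graph whose vertex classes have sizes p and q,
  in the block form [O M; M^T O], with M a p x q matrix with entries in {-1,0,1}
  (entry 0: no edge; entry +-1: edge with that sign).\<close>
definition signed_bip_adj :: "nat \<Rightarrow> nat \<Rightarrow> int mat \<Rightarrow> int mat" where
  "signed_bip_adj p q M = four_block_mat (0\<^sub>m p p) M (transpose_mat M) (0\<^sub>m q q)"

definition sign_block :: "nat \<Rightarrow> nat \<Rightarrow> int mat \<Rightarrow> bool" where
  "sign_block p q M \<longleftrightarrow> M \<in> carrier_mat p q \<and>
     (\<forall>i<p. \<forall>j<q. M $$ (i,j) \<in> {-1, 0, 1})"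

definition all_ones_mat :: "nat \<Rightarrow> 'a::one mat" ("J\<^sub>m") where
  "J\<^sub>m n = mat n n (\<lambda>_. 1)"

definition gen_cospectral :: "int mat \<Rightarrow> int mat \<Rightarrow> bool" where
  "gen_cospectral A B \<longleftrightarrow>
     char_poly A = char_poly B \<and>
     char_poly (J\<^sub>m (dim_row A) - 1\<^sub>m (dim_row A) - A) = char_poly (J\<^sub>m (dim_row B) - 1\<^sub>m (dim_row B) - B)"

definition orthogonal_mat :: "'a::comm_ring_1 mat \<Rightarrow> bool" where
  "orthogonal_mat Q \<longleftrightarrow> Q \<in> carrier_mat (dim_row Q) (dim_row Q) \<and>
     transpose_mat Q * Q = 1\<^sub>m (dim_row Q)"

definition regular_mat :: "'a::comm_ring_1 mat \<Rightarrow> bool" where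
  "regular_mat Q \<longleftrightarrow> Q *\<^sub>v vec (dim_col Q) (\<lambda>_. 1) = vec (dim_row Q) (\<lambda>_. 1)"

end

(*
  Since the characteristic polynomial phi is irreducible over Q, every nonzero vector, in
  particular the all-ones vector e, is cyclic for A and for its cospectral mate B.  Generalized
  cospectrality gives det(y - A + J) = det(y - B + J); as this determinant equals
  phi(y) + e^T adj(y - A) e, the walk counts e^T A^k e and e^T B^k e coincide.  Hence the map
  h(B) e |-> h(A) e is a regular rational orthogonal Q with A Q = Q B.  An orthogonal matrix
  commuting with A is a polynomial f(A) with f^2 = 1 modulo phi, hence +-1, so Q is unique up
  to sign.  The diagonal matrices D = diag(I_p, -I_q) and D' = diag(I_p', -I_q') anticommute
  with A and B, so D Q D' also conjugates A to B, whence D Q D' = +-Q.  This gives the block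
  shape of Q, and counting sum_ij D_ii Q_ij^2 by rows and by columns gives p - q = +-(p' - q').
*)
theory Submission
  imports Defs "HOL-Computational_Algebra.Field_as_Ring"
begin

section \<open>Orthogonal and regular matrices\<close>

definition ones_vec :: "nat \<Rightarrow> 'a::one vec" where
  "ones_vec n = vec n (\<lambda>_. 1)"

lemma ones_vec_carrier [simp]: "ones_vec n \<in> carrier_vec n"
  by (simp add: ones_vec_def)

lemma ones_vec_nonzero: "0 < n \<Longrightarrow> ones_vec n \<noteq> (0\<^sub>v n :: 'a::zero_neq_one vec)"
  by (auto simp: ones_vec_def vec_eq_iff)

lemma regular_mat_iff: "Q \<in> carrier_mat nr nc \<Longrightarrow> regular_mat Q \<longleftrightarrow> Q *\<^sub>v ones_vec nc = ones_vec nr"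
  by (simp add: regular_mat_def ones_vec_def)

lemma mat_eq_by_mult_vec:
  fixes M N :: "'a::semiring_1 mat"
  assumes M: "M \<in> carrier_mat nr n" and N: "N \<in> carrier_mat nr n"
    and eq: "\<And>v. v \<in> carrier_vec n \<Longrightarrow> M *\<^sub>v v = N *\<^sub>v v"
  shows "M = N"
proof (rule eq_matI)
  fix i j assume "i < dim_row N" "j < dim_col N"
  hence "i < nr" "j < n" using N by auto
  hence "(M *\<^sub>v unit_vec n j) $ i = (N *\<^sub>v unit_vec n j) $ i" using eq[of "unit_vec n j"] by simp
  thus "M $$ (i,j) = N $$ (i,j)" using M N \<open>i < nr\<close> \<open>j < n\<close> by simp
qed (use M N in auto)

lemma vec_eq_by_scalar_prod:
  fixes x y :: "'a::semiring_1 vec"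
  assumes x: "x \<in> carrier_vec n" and y: "y \<in> carrier_vec n"
    and eq: "\<And>w. w \<in> carrier_vec n \<Longrightarrow> x \<bullet> w = y \<bullet> w"
  shows "x = y"
proof (rule eq_vecI)
  fix i assume "i < dim_vec y"
  hence i: "i < n" using y by simp
  show "x $ i = y $ i"
    using eq[of "unit_vec n i"] scalar_prod_right_unit[OF i, of x] scalar_prod_right_unit[OF i, of y]
      x y by simp
qed (use x y in auto)

lemma orthogonal_mat_scalar_prod:
  fixes Q :: "'a::comm_ring_1 mat"
  assumes Q: "Q \<in> carrier_mat n n" and orth: "orthogonal_mat Q"
    and u: "u \<in> carrier_vec n" and w: "w \<in> carrier_vec n"
  shows "(Q *\<^sub>v u) \<bullet> (Q *\<^sub>v w) = u \<bullet> w"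
proof -
  have "(Q *\<^sub>v u) \<bullet> (Q *\<^sub>v w) = (transpose_mat Q *\<^sub>v (Q *\<^sub>v u)) \<bullet> w"
    by (rule transpose_vec_mult_scalar[OF Q w, symmetric]) (use Q u in simp)
  also have "\<dots> = ((transpose_mat Q * Q) *\<^sub>v u) \<bullet> w"
    using Q u by (subst assoc_mult_mat_vec[of _ n n _ n]) auto
  also have "transpose_mat Q * Q = 1\<^sub>m n" using orth Q by (simp add: orthogonal_mat_def)
  finally show ?thesis using u by simp
qed

lemma orthogonal_matI_scalar_prod:
  fixes Q :: "'a::comm_ring_1 mat"
  assumes Q: "Q \<in> carrier_mat n n"
    and pres: "\<And>u w. u \<in> carrier_vec n \<Longrightarrow> w \<in> carrier_vec n \<Longrightarrow> (Q *\<^sub>v u) \<bullet> (Q *\<^sub>v w) = u \<bullet> w"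
  shows "orthogonal_mat Q"
proof -
  have "transpose_mat Q * Q = 1\<^sub>m n"
  proof (rule mat_eq_by_mult_vec)
    fix v :: "'a vec" assume v: "v \<in> carrier_vec n"
    show "(transpose_mat Q * Q) *\<^sub>v v = 1\<^sub>m n *\<^sub>v v"
    proof (rule vec_eq_by_scalar_prod)
      fix w :: "'a vec" assume w: "w \<in> carrier_vec n"
      have "((transpose_mat Q * Q) *\<^sub>v v) \<bullet> w = (transpose_mat Q *\<^sub>v (Q *\<^sub>v v)) \<bullet> w"
        using Q v by (subst assoc_mult_mat_vec[of _ n n _ n]) auto
      also have "\<dots> = (Q *\<^sub>v v) \<bullet> (Q *\<^sub>v w)" by (rule transpose_vec_mult_scalar[OF Q w]) (use Q v in simp)
      finally show "((transpose_mat Q * Q) *\<^sub>v v) \<bullet> w = (1\<^sub>m n *\<^sub>v v) \<bullet> w" using pres[OF v w] v by simp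
    qed (use Q v in auto)
  qed (use Q in auto)
  thus ?thesis using Q by (simp add: orthogonal_mat_def)
qed

lemma orthogonal_mat_mult_transpose:
  assumes "(Q :: 'a::field mat) \<in> carrier_mat n n" and "orthogonal_mat Q"
  shows "Q * transpose_mat Q = 1\<^sub>m n"
  using assms mat_mult_left_right_inverse[of "transpose_mat Q" n Q] by (simp add: orthogonal_mat_def)

lemma orthogonal_mat_mult:
  fixes Q R :: "'a::comm_ring_1 mat"
  assumes Q: "Q \<in> carrier_mat n n" "orthogonal_mat Q" and R: "R \<in> carrier_mat n n" "orthogonal_mat R"
  shows "orthogonal_mat (Q * R)"
proof -
  have "transpose_mat (Q * R) * (Q * R) = transpose_mat R * (transpose_mat Q * Q) * R"
    using Q R by (simp add: transpose_mult[of _ n n _ n] assoc_mult_mat[of _ n n _ n _ n])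
  thus ?thesis using Q R by (simp add: orthogonal_mat_def)
qed

lemma sum_lessThan_eq_block:
  fixes f :: "nat \<Rightarrow> 'a::comm_monoid_add"
  assumes "r + m \<le> n" and "\<And>k. k < n \<Longrightarrow> k < r \<or> r + m \<le> k \<Longrightarrow> f k = 0"
  shows "(\<Sum>k<n. f k) = (\<Sum>k<m. f (r + k))"
proof -
  have "(\<Sum>k<n. f k) = (\<Sum>k\<in>{r..<r + m}. f k)"
    using assms by (intro sum.mono_neutral_right) auto
  also have "\<dots> = (\<Sum>k<m. f (r + k))"
    using sum.shift_bounds_nat_ivl[of f 0 r m] by (simp add: lessThan_atLeast0 add.commute)
  finally show ?thesis .
qed

lemma orthogonal_regular_block:
  fixes Q :: "'a::comm_ring_1 mat"
  assumes Q: "Q \<in> carrier_mat n n" "orthogonal_mat Q" "regular_mat Q"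
    and zero: "\<forall>i<n. \<forall>j<n. (r \<le> i \<and> i < r + m) \<noteq> (c \<le> j \<and> j < c + m) \<longrightarrow> Q $$ (i,j) = 0"
    and r: "r + m \<le> n" and c: "c + m \<le> n"
  shows "orthogonal_mat (mat m m (\<lambda>(i,j). Q $$ (r + i, c + j)))" (is "orthogonal_mat ?B")
    and "regular_mat (mat m m (\<lambda>(i,j). Q $$ (r + i, c + j)))"
proof -
  define B where "B = ?B"
  have B: "B \<in> carrier_mat m m" by (simp add: B_def)
  have "(transpose_mat B * B) $$ (i,j) = 1\<^sub>m m $$ (i,j)" if "i < m" "j < m" for i j
  proof -
    have "(transpose_mat B * B) $$ (i,j) = (\<Sum>k<m. Q $$ (r + k, c + i) * Q $$ (r + k, c + j))"
      using that by (simp add: B_def scalar_prod_def lessThan_atLeast0)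
    also have "\<dots> = (\<Sum>k<n. Q $$ (k, c + i) * Q $$ (k, c + j))"
      using that r c by (intro sum_lessThan_eq_block[symmetric]) (auto simp: zero)
    also have "\<dots> = (transpose_mat Q * Q) $$ (c + i, c + j)"
      using that c Q(1) by (simp add: scalar_prod_def lessThan_atLeast0)
    also have "transpose_mat Q * Q = 1\<^sub>m n" using Q(1,2) by (simp add: orthogonal_mat_def)
    finally show ?thesis using that c by simp
  qed
  thus "orthogonal_mat ?B" using B by (auto simp: orthogonal_mat_def B_def[symmetric] intro!: eq_matI)
  have "(B *\<^sub>v ones_vec m) $ i = ones_vec m $ i" if "i < m" for i
  proof -
    have "(B *\<^sub>v ones_vec m) $ i = (\<Sum>k<m. Q $$ (r + i, c + k))"
      using that by (simp add: B_def ones_vec_def scalar_prod_def lessThan_atLeast0)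
    also have "\<dots> = (\<Sum>k<n. Q $$ (r + i, k))"
      using that r c by (intro sum_lessThan_eq_block[symmetric]) (auto simp: zero)
    also have "\<dots> = (Q *\<^sub>v ones_vec n) $ (r + i)"
      using that r Q(1) by (simp add: ones_vec_def scalar_prod_def lessThan_atLeast0)
    also have "Q *\<^sub>v ones_vec n = ones_vec n" using Q by (simp add: regular_mat_iff)
    finally show ?thesis using that r by (simp add: ones_vec_def)
  qed
  thus "regular_mat ?B" using B by (auto simp: regular_mat_iff[OF B] ones_vec_def B_def[symmetric] intro!: eq_vecI)
qed

section \<open>Polynomials in a matrix acting on vectors\<close>

lemma mult_mat_vec_zero [simp]: "A \<in> carrier_mat nr nc \<Longrightarrow> A *\<^sub>v 0\<^sub>v nc = 0\<^sub>v nr"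
  by (rule eq_vecI) (auto simp: scalar_prod_def)

lemma smult_zero_vec [simp]: "(c::'a::semiring_0) \<cdot>\<^sub>v 0\<^sub>v n = 0\<^sub>v n"
  by (rule eq_vecI) auto

fun mat_pow_vec :: "'a::semiring_1 mat \<Rightarrow> nat \<Rightarrow> 'a vec \<Rightarrow> 'a vec" where
  "mat_pow_vec A 0 v = v"
| "mat_pow_vec A (Suc k) v = A *\<^sub>v mat_pow_vec A k v"

lemma mat_pow_vec_carrier [simp]:
  "A \<in> carrier_mat n n \<Longrightarrow> v \<in> carrier_vec n \<Longrightarrow> mat_pow_vec A k v \<in> carrier_vec n"
  by (induct k) auto

lemma mat_pow_vec_dim:
  "A \<in> carrier_mat n n \<Longrightarrow> v \<in> carrier_vec n \<Longrightarrow> dim_vec (mat_pow_vec A k v) = n"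
  by (induct k) auto

lemma mat_pow_vec_mat_pow_vec: "mat_pow_vec A k (mat_pow_vec A j v) = mat_pow_vec A (k + j) v"
  by (induct k) auto

definition poly_mat_vec :: "'a::field mat \<Rightarrow> 'a poly \<Rightarrow> 'a vec \<Rightarrow> 'a vec" where
  "poly_mat_vec A f v = vec (dim_row A) (\<lambda>i. \<Sum>k\<le>degree f. coeff f k * (mat_pow_vec A k v $ i))"

context
  fixes A :: "'a::field mat" and n :: nat
  assumes A: "A \<in> carrier_mat n n"
begin

lemma poly_mat_vec_carrier [simp]: "poly_mat_vec A f v \<in> carrier_vec n"
  using A by (simp add: poly_mat_vec_def)

lemma poly_mat_vec_dim [simp]: "dim_vec (poly_mat_vec A f v) = n"
  using A by (simp add: poly_mat_vec_def)

lemma poly_mat_vec_index: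
  assumes "i < n" and "degree f < m"
  shows "poly_mat_vec A f v $ i = (\<Sum>k<m. coeff f k * (mat_pow_vec A k v $ i))"
proof -
  have "poly_mat_vec A f v $ i = (\<Sum>k\<le>degree f. coeff f k * (mat_pow_vec A k v $ i))"
    using assms A by (simp add: poly_mat_vec_def)
  also have "\<dots> = (\<Sum>k<m. coeff f k * (mat_pow_vec A k v $ i))"
    by (rule sum.mono_neutral_left) (use assms in \<open>auto simp: coeff_eq_0\<close>)
  finally show ?thesis .
qed

lemma mult_mat_vec_lincomb:
  assumes w: "\<And>k. w k \<in> carrier_vec n" and i: "i < n"
  shows "(\<Sum>k<m. c k * ((A *\<^sub>v w k) $ i)) = (A *\<^sub>v vec n (\<lambda>j. \<Sum>k<m. c k * (w k $ j))) $ i"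
proof -
  have dw: "\<And>k. dim_vec (w k) = n" using w by auto
  have "(\<Sum>k<m. c k * ((A *\<^sub>v w k) $ i)) = (\<Sum>k<m. c k * (\<Sum>j<n. A $$ (i,j) * w k $ j))"
    using A i by (auto simp: scalar_prod_def lessThan_atLeast0 dw)
  also have "\<dots> = (\<Sum>j<n. A $$ (i,j) * (\<Sum>k<m. c k * w k $ j))"
    unfolding sum_distrib_left by (subst sum.swap) (intro sum.cong refl, simp add: mult.left_commute)
  also have "\<dots> = (A *\<^sub>v vec n (\<lambda>j. \<Sum>k<m. c k * (w k $ j))) $ i"
    using A w i by (auto simp: scalar_prod_def lessThan_atLeast0)
  finally show ?thesis .
qed

lemma poly_mat_vec_pCons:
  assumes v: "v \<in> carrier_vec n"
  shows "poly_mat_vec A (pCons a f) v = a \<cdot>\<^sub>v v + A *\<^sub>v poly_mat_vec A f v"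
proof (rule eq_vecI)
  fix i assume "i < dim_vec (a \<cdot>\<^sub>v v + A *\<^sub>v poly_mat_vec A f v)"
  hence i: "i < n" using A v by simp
  define m where "m = degree f + 2"
  have "degree f < m" by (simp add: m_def)
  have "poly_mat_vec A (pCons a f) v $ i = (\<Sum>k<Suc m. coeff (pCons a f) k * (mat_pow_vec A k v $ i))"
    by (rule poly_mat_vec_index[OF i]) (cases "f = 0"; simp add: m_def)
  also have "\<dots> = a * v $ i + (\<Sum>k<m. coeff f k * ((A *\<^sub>v mat_pow_vec A k v) $ i))"
    by (subst sum.lessThan_Suc_shift) simp
  also have "(\<Sum>k<m. coeff f k * ((A *\<^sub>v mat_pow_vec A k v) $ i))
      = (A *\<^sub>v vec n (\<lambda>j. \<Sum>k<m. coeff f k * (mat_pow_vec A k v $ j))) $ i"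
    by (rule mult_mat_vec_lincomb[OF mat_pow_vec_carrier[OF A v] i])
  also have "vec n (\<lambda>j. \<Sum>k<m. coeff f k * (mat_pow_vec A k v $ j)) = poly_mat_vec A f v"
    using poly_mat_vec_index[of _ f m v] by (intro eq_vecI) (simp_all add: \<open>degree f < m\<close>)
  finally show "poly_mat_vec A (pCons a f) v $ i = (a \<cdot>\<^sub>v v + A *\<^sub>v poly_mat_vec A f v) $ i"
    using i A v by simp
qed (use A v in \<open>simp add: poly_mat_vec_def\<close>)

lemma poly_mat_vec_0 [simp]: "poly_mat_vec A 0 v = 0\<^sub>v n"
  using A by (auto simp: poly_mat_vec_def)

lemma poly_mat_vec_const: "v \<in> carrier_vec n \<Longrightarrow> poly_mat_vec A [:c:] v = c \<cdot>\<^sub>v v"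
  using poly_mat_vec_pCons[of v c 0] A by simp

lemma poly_mat_vec_1 [simp]: "v \<in> carrier_vec n \<Longrightarrow> poly_mat_vec A 1 v = v"
  using poly_mat_vec_const[of v 1] by (simp add: one_pCons)

lemma poly_mat_vec_X:
  "v \<in> carrier_vec n \<Longrightarrow> poly_mat_vec A (pCons 0 f) v = A *\<^sub>v poly_mat_vec A f v"
  using poly_mat_vec_pCons[of v 0 f] A by (auto intro!: eq_vecI)

lemma poly_mat_vec_add:
  assumes v: "v \<in> carrier_vec n"
  shows "poly_mat_vec A (f + g) v = poly_mat_vec A f v + poly_mat_vec A g v"
proof (induction f arbitrary: g)
  case 0
  then show ?case by simp
next
  case (pCons a f)
  obtain b g' where g: "g = pCons b g'" by (cases g)
  show ?case unfolding g add_pCons poly_mat_vec_pCons[OF v] pCons.IH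
    by (subst mult_add_distrib_mat_vec[OF A]) (use A v in \<open>auto intro!: eq_vecI simp: algebra_simps\<close>)
qed

lemma poly_mat_vec_smult:
  assumes v: "v \<in> carrier_vec n"
  shows "poly_mat_vec A (Polynomial.smult c f) v = c \<cdot>\<^sub>v poly_mat_vec A f v"
proof (induction f)
  case (pCons a f)
  show ?case unfolding smult_pCons poly_mat_vec_pCons[OF v] pCons.IH mult_mat_vec[OF A poly_mat_vec_carrier[of f v]]
    by (rule eq_vecI) (use A v in \<open>auto simp: algebra_simps\<close>)
qed simp

lemma poly_mat_vec_diff:
  assumes v: "v \<in> carrier_vec n"
  shows "poly_mat_vec A (f - g) v = poly_mat_vec A f v - poly_mat_vec A g v"
  using poly_mat_vec_add[OF v, of f "Polynomial.smult (-1) g"] poly_mat_vec_smult[OF v, of "-1" g]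
  by (auto intro!: eq_vecI)

lemma poly_mat_vec_zero_vec [simp]: "poly_mat_vec A f (0\<^sub>v n) = 0\<^sub>v n"
proof (induction f)
  case (pCons a f)
  then show ?case using A by (simp add: poly_mat_vec_pCons)
qed simp

lemma poly_mat_vec_commute:
  assumes R: "R \<in> carrier_mat n n" and RA: "R * A = A * R" and v: "v \<in> carrier_vec n"
  shows "R *\<^sub>v poly_mat_vec A f v = poly_mat_vec A f (R *\<^sub>v v)"
proof (induction f)
  case (pCons a f)
  have "R *\<^sub>v (A *\<^sub>v poly_mat_vec A f v) = A *\<^sub>v (R *\<^sub>v poly_mat_vec A f v)"
    using assoc_mult_mat_vec[OF R A, symmetric] assoc_mult_mat_vec[OF A R] RA by simp
  then show ?case
    using pCons.IH R v A
    by (simp add: poly_mat_vec_pCons mult_add_distrib_mat_vec[OF R] mult_mat_vec[OF R])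
qed (use R in simp)

lemma poly_mat_vec_mult:
  assumes v: "v \<in> carrier_vec n"
  shows "poly_mat_vec A (f * g) v = poly_mat_vec A f (poly_mat_vec A g v)"
proof (induction f)
  case (pCons a f)
  show ?case
    unfolding mult_pCons_left poly_mat_vec_add[OF v] poly_mat_vec_smult[OF v]
      poly_mat_vec_pCons[OF v] poly_mat_vec_pCons[OF poly_mat_vec_carrier] pCons.IH
    by (rule eq_vecI) (use A v in auto)
qed simp

lemma poly_mat_vec_scalar_prod_sym:
  assumes S: "transpose_mat A = A" and u: "u \<in> carrier_vec n" and w: "w \<in> carrier_vec n"
  shows "poly_mat_vec A f u \<bullet> w = u \<bullet> poly_mat_vec A f w"
  using w
proof (induction f arbitrary: w)
  case (pCons a f)
  note w = pCons.prems
  have "(A *\<^sub>v poly_mat_vec A f u) \<bullet> w = poly_mat_vec A f u \<bullet> (A *\<^sub>v w)"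
    using transpose_vec_mult_scalar[OF A w, of "poly_mat_vec A f u"] S by simp
  also have "\<dots> = u \<bullet> poly_mat_vec A f (A *\<^sub>v w)" using pCons.IH A w by simp
  also have "\<dots> = u \<bullet> (A *\<^sub>v poly_mat_vec A f w)" using poly_mat_vec_commute[OF A refl w] by simp
  finally show ?case
    using A u w
    by (simp add: poly_mat_vec_pCons add_scalar_prod_distrib[of _ n] scalar_prod_add_distrib[of _ n])
qed (use u in simp)

end

lemma coeff_adj_char_poly_matrix:
  assumes A: "(A :: 'a::field mat) \<in> carrier_mat n n" and i: "i < n" and l: "l < n"
  shows "(if k = 0 then 0 else coeff (adj_mat (char_poly_matrix A) $$ (i,l)) (k - 1))
    - (\<Sum>j<n. coeff (adj_mat (char_poly_matrix A) $$ (i,j)) k * A $$ (j,l))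
    = (if i = l then coeff (char_poly A) k else 0)"
proof -
  define Adj where "Adj = adj_mat (char_poly_matrix A)"
  have P: "char_poly_matrix A \<in> carrier_mat n n" using A by simp
  have Adj: "Adj \<in> carrier_mat n n" using adj_mat(1)[OF P] unfolding Adj_def .
  have coeff_term: "coeff (f * ([:0,1:] * (if j = l then 1 else 0) + [:- a:])) k =
      (if j = l then (if k = 0 then 0 else coeff f (k - 1)) else 0) - a * coeff f k"
    for f :: "'a poly" and j a
    by (cases "j = l"; cases k) (auto simp: algebra_simps)
  have "(Adj * char_poly_matrix A) $$ (i,l)
      = (\<Sum>j<n. Adj $$ (i,j) * ([:0,1:] * (if j = l then 1 else 0) + [:- A $$ (j,l):]))"
    using A Adj i l by (auto simp: scalar_prod_def lessThan_atLeast0 char_poly_matrix_def)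
  hence "coeff ((Adj * char_poly_matrix A) $$ (i,l)) k = (\<Sum>j<n.
      (if j = l then (if k = 0 then 0 else coeff (Adj $$ (i,j)) (k - 1)) else 0) - A $$ (j,l) * coeff (Adj $$ (i,j)) k)"
    by (simp only: coeff_sum coeff_term)
  also have "\<dots> = (if k = 0 then 0 else coeff (Adj $$ (i,l)) (k - 1))
      - (\<Sum>j<n. coeff (Adj $$ (i,j)) k * A $$ (j,l))"
    using l by (simp add: sum_subtractf mult.commute)
  finally have E: "coeff ((Adj * char_poly_matrix A) $$ (i,l)) k = \<dots>" .
  have "Adj * char_poly_matrix A = char_poly A \<cdot>\<^sub>m 1\<^sub>m n"
    using adj_mat(3)[OF P] unfolding Adj_def char_poly_def by simp
  hence "coeff ((Adj * char_poly_matrix A) $$ (i,l)) k = (if i = l then coeff (char_poly A) k else 0)"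
    using i l by simp
  thus ?thesis unfolding E unfolding Adj_def .
qed

text \<open>Cayley--Hamilton, applied to a vector: the coefficients of \<open>adj (X I - A)\<close> make the
  sum defining \<open>\<phi>(A) v\<close> telescope.\<close>

lemma poly_mat_vec_char_poly:
  assumes A: "(A :: 'a::field mat) \<in> carrier_mat n n" and v: "v \<in> carrier_vec n"
  shows "poly_mat_vec A (char_poly A) v = 0\<^sub>v n"
proof -
  define Adj where "Adj = adj_mat (char_poly_matrix A)"
  define D where "D = (\<Sum>i<n. \<Sum>j<n. degree (Adj $$ (i,j))) + degree (char_poly A)"
  define B where "B k i j = (if k = 0 then 0 else coeff (Adj $$ (i,j)) (k - 1))" for k i j
  define t where "t k i = (\<Sum>j<n. B k i j * (mat_pow_vec A k v $ j))" for k i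
  have deg: "degree (Adj $$ (i,j)) \<le> D" if "i < n" "j < n" for i j
  proof -
    have "degree (Adj $$ (i,j)) \<le> (\<Sum>j<n. degree (Adj $$ (i,j)))"
      by (rule member_le_sum) (use that in auto)
    also have "\<dots> \<le> (\<Sum>i<n. \<Sum>j<n. degree (Adj $$ (i,j)))"
      by (rule member_le_sum[of i "{..<n}" "\<lambda>i. \<Sum>j<n. degree (Adj $$ (i,j))"]) (use that in auto)
    finally show ?thesis unfolding D_def by simp
  qed
  have telescope: "coeff (char_poly A) k * (mat_pow_vec A k v $ i) = t k i - t (Suc k) i"
    if i: "i < n" for k i
  proof -
    let ?w = "mat_pow_vec A k v"
    have w: "?w \<in> carrier_vec n" using A v by simp
    have "t (Suc k) i = (\<Sum>j<n. coeff (Adj $$ (i,j)) k * (\<Sum>l<n. A $$ (j,l) * ?w $ l))"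
      unfolding t_def B_def using A w by (auto intro!: sum.cong simp: scalar_prod_def lessThan_atLeast0)
    also have "\<dots> = (\<Sum>l<n. (\<Sum>j<n. coeff (Adj $$ (i,j)) k * A $$ (j,l)) * ?w $ l)"
      unfolding sum_distrib_left sum_distrib_right by (subst sum.swap) (simp add: mult.assoc)
    finally have "t k i - t (Suc k) i
        = (\<Sum>l<n. (B k i l - (\<Sum>j<n. coeff (Adj $$ (i,j)) k * A $$ (j,l))) * ?w $ l)"
      unfolding t_def by (simp add: sum_subtractf algebra_simps)
    also have "\<dots> = (\<Sum>l<n. (if l = i then coeff (char_poly A) k * ?w $ l else 0))"
      using coeff_adj_char_poly_matrix[OF A i] unfolding B_def Adj_def
      by (intro sum.cong) auto
    finally show ?thesis using i by simp
  qed
  show ?thesis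
  proof (rule eq_vecI)
    fix i assume "i < dim_vec (0\<^sub>v n :: 'a vec)"
    hence i: "i < n" by simp
    have "poly_mat_vec A (char_poly A) v $ i = (\<Sum>k<D + 2. coeff (char_poly A) k * (mat_pow_vec A k v $ i))"
      by (rule poly_mat_vec_index[OF A i]) (simp add: D_def)
    also have "\<dots> = (\<Sum>k<D + 2. t k i - t (Suc k) i)" using telescope[OF i] by simp
    also have "\<dots> = t 0 i - t (D + 2) i" by (rule sum_lessThan_telescope')
    also have "\<dots> = 0"
      using deg[OF i] by (auto intro!: sum.neutral coeff_eq_0 simp: t_def B_def le_imp_less_Suc)
    finally show "poly_mat_vec A (char_poly A) v $ i = 0\<^sub>v n $ i" using i by simp
  qed (use A in simp)
qed

section \<open>Cyclic vectors\<close>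

definition krylov_mat :: "'a::semiring_1 mat \<Rightarrow> 'a vec \<Rightarrow> 'a mat" where
  "krylov_mat A v = mat (dim_row A) (dim_row A) (\<lambda>(i,j). mat_pow_vec A j v $ i)"

context
  fixes A :: "'a::field mat" and n :: nat
  assumes A: "A \<in> carrier_mat n n"
begin

lemma poly_mat_vec_mod_char_poly:
  assumes v: "v \<in> carrier_vec n"
  shows "poly_mat_vec A (h mod char_poly A) v = poly_mat_vec A h v"
proof -
  have "poly_mat_vec A h v
      = poly_mat_vec A (h div char_poly A * char_poly A) v + poly_mat_vec A (h mod char_poly A) v"
    using poly_mat_vec_add[OF A v, of "h div char_poly A * char_poly A" "h mod char_poly A"] by simp
  also have "poly_mat_vec A (h div char_poly A * char_poly A) v = 0\<^sub>v n"
    using A v by (simp add: poly_mat_vec_mult poly_mat_vec_char_poly)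
  finally show ?thesis using A v by simp
qed

lemma krylov_mat_carrier: "krylov_mat A v \<in> carrier_mat n n"
  using A by (simp add: krylov_mat_def)

lemma poly_mat_vec_eq_krylov_mat:
  assumes "degree f < n"
  shows "poly_mat_vec A f v = krylov_mat A v *\<^sub>v vec n (coeff f)"
proof (rule eq_vecI)
  fix i assume "i < dim_vec (krylov_mat A v *\<^sub>v vec n (coeff f))"
  hence i: "i < n" using A by (simp add: krylov_mat_def)
  show "poly_mat_vec A f v $ i = (krylov_mat A v *\<^sub>v vec n (coeff f)) $ i"
    using A i poly_mat_vec_index[OF A i assms]
    by (auto simp: krylov_mat_def scalar_prod_def lessThan_atLeast0 mult.commute intro!: sum.cong)
qed (use A in \<open>simp add: krylov_mat_def\<close>)

end

lemma vec_eq_coeffs: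
  assumes "(c :: 'a::comm_monoid_add vec) \<in> carrier_vec n" and "0 < n"
  obtains f where "degree f < n" and "vec n (coeff f) = c"
proof
  define f where "f = (\<Sum>j<n. monom (c $ j) j)"
  have cf: "coeff f k = (if k < n then c $ k else 0)" for k
    unfolding f_def coeff_sum by (auto simp: coeff_monom)
  have "degree f \<le> n - 1" by (rule degree_le) (auto simp: cf)
  thus "degree f < n" using assms(2) by simp
  show "vec n (coeff f) = c" using assms by (auto simp: cf)
qed

context
  fixes A :: "'a::field_gcd mat" and n :: nat
  assumes A: "A \<in> carrier_mat n n" and irr: "irreducible (char_poly A)"
begin

lemma irreducible_char_poly_dim_pos: "0 < n"
proof (rule ccontr)
  assume "\<not> 0 < n"
  hence "char_poly A = 1"
    using degree_monic_char_poly[OF A] by (metis degree_0_id gr0I one_pCons)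
  thus False using irr by simp
qed

lemma char_poly_dvd_if_annihilates:
  assumes v: "v \<in> carrier_vec n" "v \<noteq> 0\<^sub>v n" and h: "poly_mat_vec A h v = 0\<^sub>v n"
  shows "char_poly A dvd h"
proof (rule ccontr)
  assume "\<not> char_poly A dvd h"
  then have "gcd (char_poly A) h = 1"
    using prime_elem_imp_coprime[OF irreducible_imp_prime_elem[OF irr]] by (simp add: coprime_iff_gcd_eq_1)
  then obtain u w where uw: "u * char_poly A + w * h = 1"
    using bezout_coefficients_fst_snd[of "char_poly A" h] by metis
  have "v = poly_mat_vec A (u * char_poly A + w * h) v" using A v by (simp add: uw)
  also have "\<dots> = 0\<^sub>v n"
    using A v by (simp add: poly_mat_vec_add poly_mat_vec_mult poly_mat_vec_char_poly h)
  finally show False using v by simp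
qed

text \<open>A nonzero vector is cyclic: its annihilator is divisible by the irreducible \<open>\<phi>\<close>,
  which has degree \<open>n\<close>.\<close>

lemma det_krylov_mat_nonzero:
  assumes v: "v \<in> carrier_vec n" "v \<noteq> 0\<^sub>v n"
  shows "det (krylov_mat A v) \<noteq> 0"
proof
  assume "det (krylov_mat A v) = 0"
  then obtain c where c: "c \<in> carrier_vec n" "c \<noteq> 0\<^sub>v n" "krylov_mat A v *\<^sub>v c = 0\<^sub>v n"
    using det_0_iff_vec_prod_zero[OF krylov_mat_carrier[OF A]] by blast
  obtain f where f: "degree f < n" "vec n (coeff f) = c"
    using vec_eq_coeffs[OF c(1) irreducible_char_poly_dim_pos] by blast
  have "poly_mat_vec A f v = 0\<^sub>v n" using poly_mat_vec_eq_krylov_mat[OF A f(1)] f(2) c(3) by simp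
  hence "char_poly A dvd f" by (rule char_poly_dvd_if_annihilates[OF v])
  hence "f = 0" using f(1) dvd_imp_degree_le[of "char_poly A" f] degree_monic_char_poly[OF A]
    by (cases "f = 0") auto
  thus False using f(2) c(2) by auto
qed

lemma cyclic_vector_span:
  assumes v: "v \<in> carrier_vec n" "v \<noteq> 0\<^sub>v n" and w: "w \<in> carrier_vec n"
  obtains f where "w = poly_mat_vec A f v"
proof -
  obtain K' where K': "K' \<in> carrier_mat n n" "krylov_mat A v * K' = 1\<^sub>m n"
    using det_non_zero_imp_unit[OF krylov_mat_carrier[OF A] det_krylov_mat_nonzero[OF v]]
    unfolding Units_def ring_mat_def by auto
  have "K' *\<^sub>v w \<in> carrier_vec n" using K'(1) w by simp
  then obtain f where f: "degree f < n" "vec n (coeff f) = K' *\<^sub>v w"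
    by (rule vec_eq_coeffs[OF _ irreducible_char_poly_dim_pos])
  have "w = (krylov_mat A v * K') *\<^sub>v w" using K'(2) w by simp
  also have "\<dots> = poly_mat_vec A f v"
    using poly_mat_vec_eq_krylov_mat[OF A f(1)] f(2) assoc_mult_mat_vec[OF krylov_mat_carrier[OF A] K'(1) w]
    by simp
  finally show ?thesis using that by blast
qed

lemma commuting_mat_is_poly:
  assumes R: "R \<in> carrier_mat n n" and RA: "R * A = A * R"
  obtains f where "\<And>v. v \<in> carrier_vec n \<Longrightarrow> R *\<^sub>v v = poly_mat_vec A f v"
proof -
  define u :: "'a vec" where "u = unit_vec n 0"
  have u: "u \<in> carrier_vec n" "u \<noteq> 0\<^sub>v n"
    using irreducible_char_poly_dim_pos unfolding u_def by (auto simp: vec_eq_iff)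
  have "R *\<^sub>v u \<in> carrier_vec n" using R u by simp
  then obtain f where f: "R *\<^sub>v u = poly_mat_vec A f u" by (rule cyclic_vector_span[OF u])
  have "R *\<^sub>v v = poly_mat_vec A f v" if v: "v \<in> carrier_vec n" for v
  proof -
    obtain h where h: "v = poly_mat_vec A h u" using cyclic_vector_span[OF u v] .
    have "R *\<^sub>v v = poly_mat_vec A h (R *\<^sub>v u)" unfolding h by (rule poly_mat_vec_commute[OF A R RA u(1)])
    also have "\<dots> = poly_mat_vec A (h * f) u" unfolding f by (rule poly_mat_vec_mult[OF A u(1), symmetric])
    also have "\<dots> = poly_mat_vec A f v" unfolding h mult.commute[of h] by (rule poly_mat_vec_mult[OF A u(1)])
    finally show ?thesis .
  qed
  thus ?thesis using that by blast
qed

lemma poly_mat_vec_eq_smult_if_dvd: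
  assumes "char_poly A dvd f - [:c:]" and v: "v \<in> carrier_vec n"
  shows "poly_mat_vec A f v = c \<cdot>\<^sub>v v"
proof -
  have "poly_mat_vec A f v - c \<cdot>\<^sub>v v = poly_mat_vec A (f - [:c:]) v"
    by (simp add: poly_mat_vec_diff[OF A v] poly_mat_vec_const[OF A v])
  also have "\<dots> = poly_mat_vec A ((f - [:c:]) mod char_poly A) v"
    by (rule poly_mat_vec_mod_char_poly[OF A v, symmetric])
  also have "\<dots> = 0\<^sub>v n" using assms(1) A by simp
  finally show ?thesis using A v by (auto simp: vec_eq_iff)
qed

text \<open>An orthogonal \<open>R = f(A)\<close> is symmetric, so \<open>R\<^sup>2 = 1\<close>; hence \<open>\<phi>\<close> divides
  \<open>(f - 1) (f + 1)\<close> and thus one of the factors.\<close>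

lemma commuting_orthogonal_mat_eq_pm_one:
  assumes SA: "transpose_mat A = A"
    and R: "R \<in> carrier_mat n n" and RA: "R * A = A * R" and RR: "orthogonal_mat R"
  shows "R = 1\<^sub>m n \<or> R = - 1\<^sub>m n"
proof -
  obtain f where Rf: "\<And>v. v \<in> carrier_vec n \<Longrightarrow> R *\<^sub>v v = poly_mat_vec A f v"
    using commuting_mat_is_poly[OF R RA] by blast
  define u :: "'a vec" where "u = unit_vec n 0"
  have u: "u \<in> carrier_vec n" "u \<noteq> 0\<^sub>v n"
    using irreducible_char_poly_dim_pos unfolding u_def by (auto simp: vec_eq_iff)
  have "R *\<^sub>v (R *\<^sub>v u) = u"
  proof (rule vec_eq_by_scalar_prod)
    fix w :: "'a vec" assume w: "w \<in> carrier_vec n"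
    have "(R *\<^sub>v (R *\<^sub>v u)) \<bullet> w = poly_mat_vec A f (R *\<^sub>v u) \<bullet> w" using Rf[of "R *\<^sub>v u"] R u by simp
    also have "\<dots> = (R *\<^sub>v u) \<bullet> poly_mat_vec A f w"
      by (rule poly_mat_vec_scalar_prod_sym[OF A SA]) (use R u w in auto)
    also have "\<dots> = u \<bullet> w" using Rf[OF w] orthogonal_mat_scalar_prod[OF R RR u(1) w] by simp
    finally show "(R *\<^sub>v (R *\<^sub>v u)) \<bullet> w = u \<bullet> w" .
  qed (use R u in auto)
  hence "poly_mat_vec A (f * f) u = u" using Rf[of "R *\<^sub>v u"] Rf[OF u(1)] A R u by (simp add: poly_mat_vec_mult[OF A])
  moreover have "(f - 1) * (f + 1) = f * f - 1" by (simp add: algebra_simps)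
  ultimately have "poly_mat_vec A ((f - 1) * (f + 1)) u = 0\<^sub>v n"
    using A u by (simp add: poly_mat_vec_diff[OF A u(1)])
  hence "char_poly A dvd (f - 1) * (f + 1)" by (rule char_poly_dvd_if_annihilates[OF u])
  moreover have "f - 1 = f - [:1:]" and "f + 1 = f - [:-1:]"
    by (simp_all add: one_pCons poly_eq_iff coeff_pCons split: nat.split)
  ultimately have "char_poly A dvd f - [:1:] \<or> char_poly A dvd f - [:-1:]"
    using prime_elem_dvd_multD[OF irreducible_imp_prime_elem[OF irr]] by metis
  then obtain c where c: "c = 1 \<or> c = -1" and dvd: "char_poly A dvd f - [:c:]" by blast
  have "R = c \<cdot>\<^sub>m 1\<^sub>m n"
    by (rule mat_eq_by_mult_vec[OF R]) (use Rf poly_mat_vec_eq_smult_if_dvd[OF dvd] in auto)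
  with c show ?thesis by auto
qed

end

section \<open>Walk counts and the regular orthogonal conjugator\<close>

text \<open>For the adjacency matrix of a signed graph, \<open>walk_count A k\<close> is the signed number of walks
  of length \<open>k\<close>.\<close>

definition walk_count :: "'a::semiring_1 mat \<Rightarrow> nat \<Rightarrow> 'a" where
  "walk_count A k = ones_vec (dim_row A) \<bullet> mat_pow_vec A k (ones_vec (dim_row A))"

lemma scalar_prod_poly_mat_vec:
  assumes A: "(A :: 'a::field mat) \<in> carrier_mat n n" and u: "u \<in> carrier_vec n" and v: "v \<in> carrier_vec n"
  shows "u \<bullet> poly_mat_vec A f v = (\<Sum>k\<le>degree f. coeff f k * (u \<bullet> mat_pow_vec A k v))"
proof -
  have "u \<bullet> poly_mat_vec A f v = (\<Sum>i<n. \<Sum>k\<le>degree f. u $ i * (coeff f k * (mat_pow_vec A k v $ i)))"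
    using A u by (simp add: scalar_prod_def poly_mat_vec_def lessThan_atLeast0 sum_distrib_left)
  also have "\<dots> = (\<Sum>k\<le>degree f. \<Sum>i<n. coeff f k * (u $ i * mat_pow_vec A k v $ i))"
    by (subst sum.swap) (simp add: mult_ac)
  also have "\<dots> = (\<Sum>k\<le>degree f. coeff f k * (u \<bullet> mat_pow_vec A k v))"
    using mat_pow_vec_carrier[OF A v, THEN carrier_vecD] by (simp add: scalar_prod_def lessThan_atLeast0 sum_distrib_left)
  finally show ?thesis .
qed

lemma ones_vec_scalar_prod_poly_mat_vec:
  assumes A: "(A :: 'a::field mat) \<in> carrier_mat n n"
  shows "ones_vec n \<bullet> poly_mat_vec A f (ones_vec n) = (\<Sum>k\<le>degree f. coeff f k * walk_count A k)"
  using scalar_prod_poly_mat_vec[OF A ones_vec_carrier ones_vec_carrier] A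
  by (simp add: walk_count_def)

lemma krylov_quotient_mult_poly_mat_vec:
  fixes A B :: "'a::field mat"
  assumes A: "A \<in> carrier_mat n n" and B: "B \<in> carrier_mat n n" and cp: "char_poly A = char_poly B"
    and n: "0 < n" and v: "v \<in> carrier_vec n"
    and K': "K' \<in> carrier_mat n n" "K' * krylov_mat B v = 1\<^sub>m n"
  shows "(krylov_mat A v * K') *\<^sub>v poly_mat_vec B h v = poly_mat_vec A h v"
proof -
  define r where "r = h mod char_poly B"
  have "char_poly B \<noteq> 0" using degree_monic_char_poly[OF B] by auto
  hence r: "degree r < n"
    using degree_mod_less'[of "char_poly B" h] n degree_monic_char_poly[OF B]
    unfolding r_def by (cases "r = 0") (auto simp: r_def)
  have "poly_mat_vec B h v = krylov_mat B v *\<^sub>v vec n (coeff r)"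
    unfolding poly_mat_vec_eq_krylov_mat[OF B r, symmetric] unfolding r_def
    by (rule poly_mat_vec_mod_char_poly[OF B v, symmetric])
  hence "(krylov_mat A v * K') *\<^sub>v poly_mat_vec B h v
      = krylov_mat A v *\<^sub>v ((K' * krylov_mat B v) *\<^sub>v vec n (coeff r))"
    using krylov_mat_carrier[OF B, of v] K'(1)
    by (simp add: assoc_mult_mat_vec[OF krylov_mat_carrier[OF A] K'(1)]
        assoc_mult_mat_vec[OF K'(1) krylov_mat_carrier[OF B]])
  also have "\<dots> = krylov_mat A v *\<^sub>v vec n (coeff r)"
    by (simp add: K'(2))
  also have "\<dots> = poly_mat_vec A h v"
    unfolding poly_mat_vec_eq_krylov_mat[OF A r, symmetric] unfolding r_def cp[symmetric]
    by (rule poly_mat_vec_mod_char_poly[OF A v])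
  finally show ?thesis .
qed

text \<open>\<open>Q = K\<^sub>A K\<^sub>B\<^sup>-\<^sup>1\<close> maps \<open>h(B) e\<close> to \<open>h(A) e\<close>; it is isometric because
  \<open>h(A) e \<bullet> g(A) e = e \<bullet> (h g)(A) e\<close> is a combination of walk counts.\<close>

lemma orthogonal_intertwiner_exists:
  fixes A B :: "'a::field_gcd mat"
  assumes A: "A \<in> carrier_mat n n" and B: "B \<in> carrier_mat n n"
    and SA: "transpose_mat A = A" and SB: "transpose_mat B = B"
    and cp: "char_poly A = char_poly B" and irr: "irreducible (char_poly A)"
    and walks: "\<And>k. walk_count A k = walk_count B k"
  obtains Q where "Q \<in> carrier_mat n n" "orthogonal_mat Q" "regular_mat Q" "A * Q = Q * B"
proof -
  let ?e = "ones_vec n :: 'a vec"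
  have irrB: "irreducible (char_poly B)" using irr cp by simp
  have n: "0 < n" by (rule irreducible_char_poly_dim_pos[OF A irr])
  have e: "?e \<in> carrier_vec n" "?e \<noteq> 0\<^sub>v n" using ones_vec_nonzero[OF n] by auto
  obtain K' where K': "K' \<in> carrier_mat n n" "K' * krylov_mat B ?e = 1\<^sub>m n"
    using det_non_zero_imp_unit[OF krylov_mat_carrier[OF B] det_krylov_mat_nonzero[OF B irrB e]]
    unfolding Units_def ring_mat_def by auto
  define Q where "Q = krylov_mat A ?e * K'"
  have Q: "Q \<in> carrier_mat n n" unfolding Q_def by (rule mult_carrier_mat[OF krylov_mat_carrier[OF A] K'(1)])
  have maps: "Q *\<^sub>v poly_mat_vec B h ?e = poly_mat_vec A h ?e" for h
    unfolding Q_def by (rule krylov_quotient_mult_poly_mat_vec[OF A B cp n e(1) K'])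
  have span: "\<exists>h. v = poly_mat_vec B h ?e" if "v \<in> carrier_vec n" for v
    using cyclic_vector_span[OF B irrB e that] by metis
  have "orthogonal_mat Q"
  proof (rule orthogonal_matI_scalar_prod[OF Q])
    fix u w :: "'a vec" assume "u \<in> carrier_vec n" and "w \<in> carrier_vec n"
    then obtain h g where h: "u = poly_mat_vec B h ?e" and g: "w = poly_mat_vec B g ?e"
      using span by blast
    have "(Q *\<^sub>v u) \<bullet> (Q *\<^sub>v w) = ?e \<bullet> poly_mat_vec A (h * g) ?e"
      unfolding h g maps poly_mat_vec_mult[OF A e(1)]
      by (rule poly_mat_vec_scalar_prod_sym[OF A SA]) (use A in auto)
    also have "\<dots> = ?e \<bullet> poly_mat_vec B (h * g) ?e"
      by (simp add: ones_vec_scalar_prod_poly_mat_vec[OF A] ones_vec_scalar_prod_poly_mat_vec[OF B] walks)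
    also have "\<dots> = u \<bullet> w"
      unfolding h g poly_mat_vec_mult[OF B e(1)]
      by (rule poly_mat_vec_scalar_prod_sym[OF B SB, symmetric]) (use B in auto)
    finally show "(Q *\<^sub>v u) \<bullet> (Q *\<^sub>v w) = u \<bullet> w" .
  qed
  moreover have "Q *\<^sub>v ?e = ?e"
    using maps[of 1] A B by simp
  moreover have "A * Q = Q * B"
  proof (rule mat_eq_by_mult_vec)
    fix v :: "'a vec" assume "v \<in> carrier_vec n"
    then obtain h where h: "v = poly_mat_vec B h ?e" using span by blast
    have "(A * Q) *\<^sub>v v = poly_mat_vec A (pCons 0 h) ?e"
      using A Q poly_mat_vec_carrier[OF B] by (simp add: h maps poly_mat_vec_X[OF A e(1)])
    also have "\<dots> = (Q * B) *\<^sub>v v"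
      using B Q poly_mat_vec_carrier[OF B] by (simp add: h maps[symmetric] poly_mat_vec_X[OF B e(1)])
    finally show "(A * Q) *\<^sub>v v = (Q * B) *\<^sub>v v" .
  qed (use A B Q in auto)
  ultimately show ?thesis using that Q by (simp add: regular_mat_iff)
qed

lemma orthogonal_intertwiner_conj:
  fixes A B Q :: "'a::comm_ring_1 mat"
  assumes "A \<in> carrier_mat n n" "B \<in> carrier_mat n n" "Q \<in> carrier_mat n n" "orthogonal_mat Q"
    and "A * Q = Q * B"
  shows "transpose_mat Q * A * Q = B"
proof -
  have Qt: "transpose_mat Q \<in> carrier_mat n n" using assms(3) by simp
  have "transpose_mat Q * A * Q = transpose_mat Q * (Q * B)"
    using assoc_mult_mat[OF Qt assms(1,3)] assms(5) by simp
  also have "\<dots> = (transpose_mat Q * Q) * B" by (rule assoc_mult_mat[OF Qt assms(3,2), symmetric])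
  also have "transpose_mat Q * Q = 1\<^sub>m n" using assms(3,4) by (simp add: orthogonal_mat_def)
  finally show ?thesis using assms(2) by simp
qed

text \<open>If \<open>Q\<close> and \<open>Q'\<close> both conjugate \<open>A\<close> to \<open>B\<close>, then \<open>Q' Q\<^sup>T\<close> is orthogonal and commutes
  with \<open>A\<close>.\<close>

lemma orthogonal_intertwiner_unique:
  fixes A B :: "'a::field_gcd mat"
  assumes A: "A \<in> carrier_mat n n" and B: "B \<in> carrier_mat n n"
    and SA: "transpose_mat A = A" and irr: "irreducible (char_poly A)"
    and Q: "Q \<in> carrier_mat n n" "orthogonal_mat Q" "A * Q = Q * B"
    and Q': "Q' \<in> carrier_mat n n" "orthogonal_mat Q'" "A * Q' = Q' * B"
  shows "Q' = Q \<or> Q' = - Q"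
proof -
  define R where "R = Q' * transpose_mat Q"
  have R: "R \<in> carrier_mat n n" using Q Q' by (simp add: R_def)
  have QQt: "Q * transpose_mat Q = 1\<^sub>m n" by (rule orthogonal_mat_mult_transpose[OF Q(1,2)])
  have QtQ: "transpose_mat Q * Q = 1\<^sub>m n" and Q'tQ': "transpose_mat Q' * Q' = 1\<^sub>m n"
    using Q Q' by (simp_all add: orthogonal_mat_def)
  have QtA: "transpose_mat Q * A = B * transpose_mat Q"
  proof -
    have Qt: "transpose_mat Q \<in> carrier_mat n n" using Q by simp
    have "transpose_mat Q * A = transpose_mat Q * A * (Q * transpose_mat Q)" using A Q by (simp add: QQt)
    also have "\<dots> = transpose_mat Q * (A * Q) * transpose_mat Q"
      using A Q(1) Qt by (simp add: assoc_mult_mat[of _ n n _ n _ n])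
    also have "\<dots> = (transpose_mat Q * Q) * B * transpose_mat Q"
      using B Q(1) Qt by (simp add: Q(3) assoc_mult_mat[of _ n n _ n _ n])
    finally show ?thesis using B Qt by (simp add: QtQ)
  qed
  have "R * A = A * R"
  proof -
    have "R * A = Q' * (B * transpose_mat Q)" using A Q Q' by (simp add: R_def QtA[symmetric])
    also have "\<dots> = (Q' * B) * transpose_mat Q" using B Q Q' by (simp add: assoc_mult_mat[of _ n n _ n _ n])
    also have "\<dots> = A * R" using A Q Q' by (simp add: R_def Q'(3)[symmetric] assoc_mult_mat[of _ n n _ n _ n])
    finally show ?thesis .
  qed
  moreover have "orthogonal_mat R"
  proof -
    have "transpose_mat R * R = Q * (transpose_mat Q' * Q') * transpose_mat Q"
      using Q Q' by (simp add: R_def transpose_mult[of _ n n _ n] assoc_mult_mat[of _ n n _ n _ n])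
    thus ?thesis using R Q by (simp add: Q'tQ' QQt orthogonal_mat_def)
  qed
  ultimately have "R = 1\<^sub>m n \<or> R = - 1\<^sub>m n"
    by (rule commuting_orthogonal_mat_eq_pm_one[OF A irr SA R])
  moreover have "Q' = R * Q" using Q Q' by (simp add: R_def QtQ assoc_mult_mat[of _ n n _ n _ n])
  ultimately show ?thesis using Q by auto
qed

section \<open>Walk counts from the spectrum of the complement\<close>

lemma det_one_plus_rank_one:
  fixes u w :: "'a::idom vec"
  assumes u: "u \<in> carrier_vec n" and w: "w \<in> carrier_vec n"
  shows "det (1\<^sub>m n + mat n n (\<lambda>(i,j). u $ i * w $ j)) = 1 + w \<bullet> u"
proof -
  define U where "U = mat n 1 (\<lambda>(i,_). u $ i)"
  define W where "W = mat 1 n (\<lambda>(_,j). w $ j)"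
  have U: "U \<in> carrier_mat n 1" and W: "W \<in> carrier_mat 1 n" by (auto simp: U_def W_def)
  define X where "X = four_block_mat (1\<^sub>m n) (- U) W (1\<^sub>m 1)"
  have X: "X \<in> carrier_mat (n+1) (n+1)" unfolding X_def using U W by auto
  define Y1 where "Y1 = four_block_mat (1\<^sub>m n) U (0\<^sub>m 1 n) (1\<^sub>m 1)"
  define Y2 where "Y2 = four_block_mat (1\<^sub>m n) (0\<^sub>m n 1) (- W) (1\<^sub>m 1)"
  have Y1: "Y1 \<in> carrier_mat (n+1) (n+1)" and Y2: "Y2 \<in> carrier_mat (n+1) (n+1)"
    unfolding Y1_def Y2_def using U W by auto
  have "X * Y1 = four_block_mat (1\<^sub>m n * 1\<^sub>m n + (- U) * 0\<^sub>m 1 n) (1\<^sub>m n * U + (- U) * 1\<^sub>m 1)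
      (W * 1\<^sub>m n + 1\<^sub>m 1 * 0\<^sub>m 1 n) (W * U + 1\<^sub>m 1 * 1\<^sub>m 1)"
    unfolding X_def Y1_def by (rule mult_four_block_mat) (use U W in auto)
  also have "\<dots> = four_block_mat (1\<^sub>m n) (0\<^sub>m n 1) W (mat 1 1 (\<lambda>_. 1 + w \<bullet> u))"
    by (intro arg_cong4[where f = four_block_mat] eq_matI)
      (use U W u w in \<open>auto simp: U_def W_def scalar_prod_def\<close>)
  finally have "det (X * Y1) = 1 + w \<bullet> u"
    using W by (simp add: det_four_block_mat_upper_right_zero[of _ n _ 1] det_single)
  moreover have "det Y1 = 1" unfolding Y1_def
    by (subst det_four_block_mat_lower_left_zero[of _ n _ 1]) (use U in auto)
  ultimately have "det X = 1 + w \<bullet> u" using det_mult[OF X Y1] by simp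
  have "X * Y2 = four_block_mat (1\<^sub>m n * 1\<^sub>m n + (- U) * (- W)) (1\<^sub>m n * 0\<^sub>m n 1 + (- U) * 1\<^sub>m 1)
      (W * 1\<^sub>m n + 1\<^sub>m 1 * (- W)) (W * 0\<^sub>m n 1 + 1\<^sub>m 1 * 1\<^sub>m 1)"
    unfolding X_def Y2_def by (rule mult_four_block_mat) (use U W in auto)
  also have "\<dots> = four_block_mat (1\<^sub>m n + mat n n (\<lambda>(i,j). u $ i * w $ j)) (- U) (0\<^sub>m 1 n) (1\<^sub>m 1)"
    by (intro arg_cong4[where f = four_block_mat] eq_matI)
      (use U W u w in \<open>auto simp: U_def W_def scalar_prod_def\<close>)
  finally have "det (X * Y2) = det (1\<^sub>m n + mat n n (\<lambda>(i,j). u $ i * w $ j))"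
    using U by (simp add: det_four_block_mat_lower_left_zero[of _ n _ 1])
  moreover have "det Y2 = 1" unfolding Y2_def
    by (subst det_four_block_mat_upper_right_zero[of _ n _ 1]) (use W in auto)
  ultimately show ?thesis using det_mult[OF X Y2] \<open>det X = 1 + w \<bullet> u\<close> by simp
qed

text \<open>\<open>pow_quot_vec A y v i = (y\<^sup>i - A\<^sup>i) (y - A)\<^sup>-\<^sup>1 v = \<Sum>k<i. y\<^sup>i\<^sup>-\<^sup>1\<^sup>-\<^sup>k A\<^sup>k v\<close>,
  \<open>adj_vec A y v (n + 1) = adj (y - A) v\<close> and \<open>poly (adj_walk_poly A) y = e\<^sup>T adj (y - A) e\<close>.
  These identifications only motivate the definitions; the proofs use just the identities below.\<close>

fun pow_quot_vec :: "'a::field mat \<Rightarrow> 'a \<Rightarrow> 'a vec \<Rightarrow> nat \<Rightarrow> 'a vec" where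
  "pow_quot_vec A y v 0 = 0\<^sub>v (dim_row A)"
| "pow_quot_vec A y v (Suc i) = y \<cdot>\<^sub>v pow_quot_vec A y v i + mat_pow_vec A i v"

fun adj_vec :: "'a::field mat \<Rightarrow> 'a \<Rightarrow> 'a vec \<Rightarrow> nat \<Rightarrow> 'a vec" where
  "adj_vec A y v 0 = 0\<^sub>v (dim_row A)"
| "adj_vec A y v (Suc m) = adj_vec A y v m + coeff (char_poly A) m \<cdot>\<^sub>v pow_quot_vec A y v m"

fun rev_prefix_poly :: "(nat \<Rightarrow> 'a::zero) \<Rightarrow> nat \<Rightarrow> 'a poly" where
  "rev_prefix_poly N 0 = 0"
| "rev_prefix_poly N (Suc i) = pCons (N i) (rev_prefix_poly N i)"

lemma coeff_rev_prefix_poly: "coeff (rev_prefix_poly N i) j = (if j < i then N (i - 1 - j) else 0)"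
  by (induct i arbitrary: j) (auto simp: coeff_pCons split: nat.splits)

definition adj_walk_poly :: "'a::field mat \<Rightarrow> 'a poly" where
  "adj_walk_poly A = (\<Sum>i\<le>dim_row A. Polynomial.smult (coeff (char_poly A) i) (rev_prefix_poly (walk_count A) i))"

context
  fixes A :: "'a::field mat" and n :: nat
  assumes A: "A \<in> carrier_mat n n"
begin

lemma pow_quot_vec_carrier [simp]: "v \<in> carrier_vec n \<Longrightarrow> pow_quot_vec A y v i \<in> carrier_vec n"
  using A by (induct i) auto

lemma adj_vec_carrier [simp]: "v \<in> carrier_vec n \<Longrightarrow> adj_vec A y v m \<in> carrier_vec n"
  using A by (induct m) auto

lemma char_mat_mult_vec:
  "w \<in> carrier_vec n \<Longrightarrow> (y \<cdot>\<^sub>m 1\<^sub>m n - A) *\<^sub>v w = y \<cdot>\<^sub>v w - A *\<^sub>v w"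
  using A by (subst minus_mult_distrib_mat_vec[of _ n n]) (auto intro!: eq_vecI)

lemma char_mat_mult_pow_quot_vec:
  assumes v: "v \<in> carrier_vec n"
  shows "(y \<cdot>\<^sub>m 1\<^sub>m n - A) *\<^sub>v pow_quot_vec A y v i = y ^ i \<cdot>\<^sub>v v - mat_pow_vec A i v"
proof (induct i)
  case 0
  then show ?case using A v minus_carrier_mat[OF A] by (auto intro!: eq_vecI)
next
  case (Suc i)
  define Y where "Y = y \<cdot>\<^sub>m 1\<^sub>m n - A"
  have Y: "Y \<in> carrier_mat n n" unfolding Y_def by (rule minus_carrier_mat[OF A])
  let ?G = "pow_quot_vec A y v i" and ?p = "mat_pow_vec A i v"
  have G: "?G \<in> carrier_vec n" and p: "?p \<in> carrier_vec n" using A v by simp_all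
  have "Y *\<^sub>v pow_quot_vec A y v (Suc i) = y \<cdot>\<^sub>v (Y *\<^sub>v ?G) + Y *\<^sub>v ?p"
    using Y G p by (simp add: mult_add_distrib_mat_vec[OF Y] mult_mat_vec[OF Y])
  also have "\<dots> = y \<cdot>\<^sub>v (y ^ i \<cdot>\<^sub>v v - ?p) + (y \<cdot>\<^sub>v ?p - A *\<^sub>v ?p)"
    using Suc char_mat_mult_vec[OF p] unfolding Y_def by simp
  also have "\<dots> = y ^ Suc i \<cdot>\<^sub>v v - mat_pow_vec A (Suc i) v"
    by (rule eq_vecI) (use A v p in \<open>auto simp: algebra_simps mat_pow_vec_dim\<close>)
  finally show ?case unfolding Y_def .
qed

lemma char_mat_mult_adj_vec:
  assumes v: "v \<in> carrier_vec n"
  shows "(y \<cdot>\<^sub>m 1\<^sub>m n - A) *\<^sub>v adj_vec A y v (Suc n) = poly (char_poly A) y \<cdot>\<^sub>v v"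
proof -
  have Y: "y \<cdot>\<^sub>m 1\<^sub>m n - A \<in> carrier_mat n n" by (rule minus_carrier_mat[OF A])
  have partial: "(y \<cdot>\<^sub>m 1\<^sub>m n - A) *\<^sub>v adj_vec A y v m = vec n (\<lambda>r.
      (\<Sum>i<m. coeff (char_poly A) i * y ^ i) * v $ r - (\<Sum>i<m. coeff (char_poly A) i * mat_pow_vec A i v $ r))"
    for m
  proof (induct m)
    case 0
    then show ?case using A Y v by (auto intro!: eq_vecI)
  next
    case (Suc m)
    then show ?case
      using Y v A
      by (auto intro!: eq_vecI simp: mult_add_distrib_mat_vec[OF Y] mult_mat_vec[OF Y]
          char_mat_mult_pow_quot_vec algebra_simps mat_pow_vec_dim)
  qed
  have "(\<Sum>i<Suc n. coeff (char_poly A) i * mat_pow_vec A i v $ r) = 0" if "r < n" for r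
    using poly_mat_vec_index[OF A that, of "char_poly A" "Suc n" v] poly_mat_vec_char_poly[OF A v]
      degree_monic_char_poly[OF A] that by simp
  moreover have "poly (char_poly A) y = (\<Sum>i<Suc n. coeff (char_poly A) i * y ^ i)"
    using degree_monic_char_poly[OF A] by (simp add: poly_altdef lessThan_Suc_atMost)
  ultimately show ?thesis
    unfolding partial using A v by (auto intro!: eq_vecI)
qed

lemma ones_vec_scalar_prod_adj_vec:
  "ones_vec n \<bullet> adj_vec A y (ones_vec n) m
    = poly (\<Sum>i<m. Polynomial.smult (coeff (char_poly A) i) (rev_prefix_poly (walk_count A) i)) y"
proof -
  have "ones_vec n \<bullet> pow_quot_vec A y (ones_vec n) i = poly (rev_prefix_poly (walk_count A) i) y" for i
    using A by (induct i) (auto simp: walk_count_def scalar_prod_add_distrib[of _ n]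
        scalar_prod_smult_distrib[of _ n] algebra_simps)
  thus ?thesis
    using A by (induct m) (auto simp: scalar_prod_add_distrib[of _ n] scalar_prod_smult_distrib[of _ n])
qed

text \<open>Matrix determinant lemma: \<open>y - A + J = (y - A) (1 + z e\<^sup>T)\<close> with \<open>(y - A) z = e\<close>.\<close>

lemma det_char_mat_plus_ones:
  assumes y: "poly (char_poly A) y \<noteq> 0"
  shows "det (y \<cdot>\<^sub>m 1\<^sub>m n - A + J\<^sub>m n) = poly (char_poly A) y + poly (adj_walk_poly A) y"
proof -
  let ?c = "poly (char_poly A) y" and ?e = "ones_vec n :: 'a vec"
  define Y where "Y = y \<cdot>\<^sub>m 1\<^sub>m n - A"
  have Y: "Y \<in> carrier_mat n n" unfolding Y_def by (rule minus_carrier_mat[OF A])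
  define z where "z = (1 / ?c) \<cdot>\<^sub>v adj_vec A y ?e (Suc n)"
  have z: "z \<in> carrier_vec n" by (simp add: z_def)
  have Yz: "Y *\<^sub>v z = ?e"
    using char_mat_mult_adj_vec[OF ones_vec_carrier, of y] y mult_mat_vec[OF Y, of _ "1 / ?c"]
    by (auto simp: z_def Y_def intro!: eq_vecI)
  define Z where "Z = mat n n (\<lambda>(i,j). z $ i * ?e $ j)"
  have Z: "Z \<in> carrier_mat n n" by (simp add: Z_def)
  have "Y + J\<^sub>m n = Y * (1\<^sub>m n + Z)"
  proof (rule eq_matI)
    fix i j assume "i < dim_row (Y * (1\<^sub>m n + Z))" "j < dim_col (Y * (1\<^sub>m n + Z))"
    hence i: "i < n" and j: "j < n" using Y Z by auto
    have "col Z j = z" using z j by (auto simp: Z_def ones_vec_def)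
    hence "(Y * Z) $$ (i,j) = 1"
      using Yz[THEN arg_cong[where f = "\<lambda>x. x $ i"]] Y Z i j by (simp add: ones_vec_def)
    moreover have "Y * (1\<^sub>m n + Z) = Y + Y * Z" using mult_add_distrib_mat[OF Y one_carrier_mat Z] Y by simp
    ultimately show "(Y + J\<^sub>m n) $$ (i,j) = (Y * (1\<^sub>m n + Z)) $$ (i,j)"
      using Y Z i j by (simp add: all_ones_mat_def)
  qed (use Y Z in \<open>auto simp: all_ones_mat_def\<close>)
  hence "det (Y + J\<^sub>m n) = det Y * (1 + ?e \<bullet> z)"
    using det_mult[OF Y, of "1\<^sub>m n + Z"] det_one_plus_rank_one[OF z ones_vec_carrier] Z
    by (simp add: Z_def)
  also have "det Y = ?c"
  proof -
    have "- char_matrix A y = Y" by (rule eq_matI) (use A in \<open>auto simp: Y_def char_matrix_def\<close>)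
    thus ?thesis using char_poly_matrix[OF A, of y] by simp
  qed
  also have "?e \<bullet> z = (1 / ?c) * poly (adj_walk_poly A) y"
    unfolding z_def using A
    by (simp add: scalar_prod_smult_distrib[of _ n] ones_vec_scalar_prod_adj_vec adj_walk_poly_def
        lessThan_Suc_atMost del: adj_vec.simps)
  finally show ?thesis using y by (simp add: Y_def ring_distribs)
qed

lemma walk_count_recurrence:
  "(\<Sum>k\<le>n. coeff (char_poly A) k * walk_count A (k + j)) = 0"
proof -
  have v: "mat_pow_vec A j (ones_vec n) \<in> carrier_vec n" using A by simp
  have "0 = ones_vec n \<bullet> poly_mat_vec A (char_poly A) (mat_pow_vec A j (ones_vec n))"
    using poly_mat_vec_char_poly[OF A v] by simp
  also have "\<dots> = (\<Sum>k\<le>n. coeff (char_poly A) k * walk_count A (k + j))"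
    using scalar_prod_poly_mat_vec[OF A ones_vec_carrier v] degree_monic_char_poly[OF A] A
    by (simp add: walk_count_def mat_pow_vec_mat_pow_vec)
  finally show ?thesis ..
qed

end

lemma coeff_adj_walk_poly:
  "coeff (adj_walk_poly A) j
    = (\<Sum>i\<le>dim_row A. coeff (char_poly A) i * (if j < i then walk_count A (i - 1 - j) else 0))"
  by (simp add: adj_walk_poly_def coeff_sum coeff_rev_prefix_poly)

text \<open>The coefficients of \<open>adj_walk_poly\<close> determine the first \<open>n\<close> walk counts by a triangular
  system, and the Cayley--Hamilton recurrence determines the rest.\<close>

lemma walk_count_eq_if_adj_walk_poly_eq:
  fixes A B :: "'a::field mat"
  assumes A: "A \<in> carrier_mat n n" and B: "B \<in> carrier_mat n n"
    and cp: "char_poly A = char_poly B" and eq: "adj_walk_poly A = adj_walk_poly B"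
  shows "walk_count A k = walk_count B k"
proof (induct k rule: less_induct)
  case (less m)
  let ?c = "coeff (char_poly A)"
  have lead: "?c n = 1" using degree_monic_char_poly[OF A] by simp
  show ?case
  proof (cases "m < n")
    case True
    define j where "j = n - 1 - m"
    have j: "j < n" "n - 1 - j = m" using True by (auto simp: j_def)
    let ?f = "\<lambda>N i. ?c i * (if j < i then N (i - 1 - j) else 0)"
    have "(\<Sum>i\<le>n. ?f (walk_count A) i) = (\<Sum>i\<le>n. ?f (walk_count B) i)"
      using arg_cong[OF eq, of "\<lambda>p. coeff p j"] A B cp by (simp add: coeff_adj_walk_poly)
    moreover have "(\<Sum>i<n. ?f (walk_count A) i) = (\<Sum>i<n. ?f (walk_count B) i)"
      using less j by (intro sum.cong) auto
    ultimately show ?thesis using j lead by (simp add: lessThan_Suc_atMost[symmetric])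
  next
    case False
    define j where "j = m - n"
    have m: "n + j = m" using False by (simp add: j_def)
    have "walk_count A m + (\<Sum>k<n. ?c k * walk_count A (k + j)) = 0"
      using walk_count_recurrence[OF A, of j] lead m by (simp add: lessThan_Suc_atMost[symmetric] add.commute)
    moreover have "walk_count B m + (\<Sum>k<n. ?c k * walk_count B (k + j)) = 0"
      using walk_count_recurrence[OF B, of j] lead m cp by (simp add: lessThan_Suc_atMost[symmetric] add.commute)
    moreover have "(\<Sum>k<n. ?c k * walk_count A (k + j)) = (\<Sum>k<n. ?c k * walk_count B (k + j))"
      using less m by (intro sum.cong) auto
    ultimately show ?thesis by (metis add_right_cancel)
  qed
qed

lemma walk_count_eq_if_det_eq:
  fixes A B :: "'a::field_char_0 mat"
  assumes A: "A \<in> carrier_mat n n" and B: "B \<in> carrier_mat n n" and cp: "char_poly A = char_poly B"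
    and dt: "\<And>y. det (y \<cdot>\<^sub>m 1\<^sub>m n - A + J\<^sub>m n) = det (y \<cdot>\<^sub>m 1\<^sub>m n - B + J\<^sub>m n)"
  shows "walk_count A k = walk_count B k"
proof (rule walk_count_eq_if_adj_walk_poly_eq[OF A B cp])
  have "poly (adj_walk_poly A) y = poly (adj_walk_poly B) y" if "poly (char_poly A) y \<noteq> 0" for y
    using det_char_mat_plus_ones[OF A that] det_char_mat_plus_ones[OF B, of y] that dt[of y] cp by simp
  show "adj_walk_poly A = adj_walk_poly B"
  proof (rule ccontr)
    assume "adj_walk_poly A \<noteq> adj_walk_poly B"
    hence "finite {y. poly (adj_walk_poly A - adj_walk_poly B) y = 0}"
      by (intro poly_roots_finite) simp
    moreover have "finite {y. poly (char_poly A) y = 0}"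
      using degree_monic_char_poly[OF A] by (intro poly_roots_finite) auto
    moreover have "UNIV \<subseteq> {y. poly (adj_walk_poly A - adj_walk_poly B) y = 0} \<union> {y. poly (char_poly A) y = 0}"
      using \<open>\<And>y. _ \<Longrightarrow> _\<close> by auto
    ultimately show False
      using infinite_UNIV_char_0 finite_subset by auto
  qed
qed

lemma char_poly_complement_eq_det:
  assumes A: "(A :: int mat) \<in> carrier_mat n n"
  shows "poly (char_poly (map_mat rat_of_int (J\<^sub>m n - 1\<^sub>m n - A))) (- y - 1)
    = (-1) ^ n * det (y \<cdot>\<^sub>m 1\<^sub>m n - map_mat rat_of_int A + J\<^sub>m n)"
proof -
  let ?C = "map_mat rat_of_int (J\<^sub>m n - 1\<^sub>m n - A)"
  have C: "?C \<in> carrier_mat n n" using minus_carrier_mat[OF A] by simp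
  have "- char_matrix ?C (- y - 1) = (-1) \<cdot>\<^sub>m (y \<cdot>\<^sub>m 1\<^sub>m n - map_mat rat_of_int A + J\<^sub>m n)"
    by (rule eq_matI) (use A in \<open>auto simp: char_matrix_def all_ones_mat_def\<close>)
  thus ?thesis using char_poly_matrix[OF C, of "- y - 1"] A by (simp add: all_ones_mat_def)
qed

lemma gen_cospectral_walk_count_eq:
  assumes A: "A \<in> carrier_mat n n" and B: "B \<in> carrier_mat n n" and gc: "gen_cospectral A B"
  shows "walk_count (map_mat rat_of_int A) k = walk_count (map_mat rat_of_int B) k"
proof (rule walk_count_eq_if_det_eq)
  have cp: "char_poly A = char_poly B"
    and cpc: "char_poly (J\<^sub>m n - 1\<^sub>m n - A) = char_poly (J\<^sub>m n - 1\<^sub>m n - B)"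
    using gc A B by (auto simp: gen_cospectral_def)
  have hom: "char_poly (map_mat rat_of_int X) = map_poly rat_of_int (char_poly X)"
    if "X \<in> carrier_mat n n" for X
    by (rule of_int_hom.char_poly_hom[OF that])
  show "char_poly (map_mat rat_of_int A) = char_poly (map_mat rat_of_int B)"
    using cp hom[OF A] hom[OF B] by simp
  fix y :: rat
  have "char_poly (map_mat rat_of_int (J\<^sub>m n - 1\<^sub>m n - A)) = char_poly (map_mat rat_of_int (J\<^sub>m n - 1\<^sub>m n - B))"
    using cpc hom[OF minus_carrier_mat[OF A]] hom[OF minus_carrier_mat[OF B]] by simp
  thus "det (y \<cdot>\<^sub>m 1\<^sub>m n - map_mat rat_of_int A + J\<^sub>m n) = det (y \<cdot>\<^sub>m 1\<^sub>m n - map_mat rat_of_int B + J\<^sub>m n)"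
    using char_poly_complement_eq_det[OF A, of y] char_poly_complement_eq_det[OF B, of y] by simp
qed (use A B in auto)

section \<open>Signed bipartite graphs\<close>

lemma index_signed_bip_adj:
  assumes "M \<in> carrier_mat p q" and "i < p + q" and "j < p + q"
  shows "signed_bip_adj p q M $$ (i,j) = (if i < p then (if j < p then 0 else M $$ (i, j - p))
      else (if j < p then M $$ (j, i - p) else 0))"
  using assms by (auto simp: signed_bip_adj_def)

lemma signed_bip_adj_carrier: "M \<in> carrier_mat p q \<Longrightarrow> signed_bip_adj p q M \<in> carrier_mat (p+q) (p+q)"
  by (auto simp: signed_bip_adj_def)

lemma transpose_signed_bip_adj:
  "M \<in> carrier_mat p q \<Longrightarrow> transpose_mat (signed_bip_adj p q M) = signed_bip_adj p q M"
  by (rule eq_matI) (auto simp: signed_bip_adj_carrier[THEN carrier_matD(1)]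
      signed_bip_adj_carrier[THEN carrier_matD(2)] index_signed_bip_adj)

definition block_sign :: "nat \<Rightarrow> nat \<Rightarrow> 'a::ring_1" where
  "block_sign p i = (if i < p then 1 else -1)"

definition block_sign_mat :: "nat \<Rightarrow> nat \<Rightarrow> 'a::ring_1 mat" where
  "block_sign_mat p n = mat_diag n (block_sign p)"

lemma block_sign_square [simp]: "block_sign p i * block_sign p i = 1"
  by (simp add: block_sign_def)

lemma sum_block_sign: "p \<le> n \<Longrightarrow> (\<Sum>i<n. block_sign p i) = of_nat p - of_nat (n - p)"
proof (induct n)
  case (Suc n)
  then show ?case by (cases "p = Suc n") (auto simp: block_sign_def of_nat_diff)
qed simp

lemma block_sign_mat_carrier [simp]: "block_sign_mat p n \<in> carrier_mat n n"
  by (simp add: block_sign_mat_def)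

lemma dim_block_sign_mat [simp]:
  "dim_row (block_sign_mat p n) = n" "dim_col (block_sign_mat p n) = n"
  by (simp_all add: block_sign_mat_def mat_diag_def)

lemma block_sign_mat_sandwich:
  assumes "(Q :: 'a::ring_1 mat) \<in> carrier_mat n n"
  shows "block_sign_mat p n * Q * block_sign_mat p' n
    = mat n n (\<lambda>(i,j). block_sign p i * Q $$ (i,j) * block_sign p' j)"
  using assms by (auto simp: block_sign_mat_def mat_diag_mult_left mat_diag_mult_right[of _ n n])

lemma orthogonal_block_sign_mat: "orthogonal_mat (block_sign_mat p n :: 'a::comm_ring_1 mat)"
proof -
  have "transpose_mat (block_sign_mat p n) = (block_sign_mat p n :: 'a mat)"
    by (auto simp: block_sign_mat_def mat_diag_def)
  moreover have "block_sign_mat p n * block_sign_mat p n = (1\<^sub>m n :: 'a mat)"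
    by (simp add: block_sign_mat_def)
  ultimately show ?thesis by (simp add: orthogonal_mat_def)
qed

lemma block_sign_mat_anticommute:
  assumes "M \<in> carrier_mat p q"
  shows "block_sign_mat p (p+q) * map_mat of_int (signed_bip_adj p q M)
    = - (map_mat of_int (signed_bip_adj p q M) * (block_sign_mat p (p+q) :: 'a::ring_1 mat))"
  using assms signed_bip_adj_carrier[OF assms]
  by (auto simp: block_sign_mat_def block_sign_def mat_diag_mult_left mat_diag_mult_right[of _ _ "p+q"]
      index_signed_bip_adj intro!: eq_matI)

lemma twisted_intertwiner:
  fixes A B Q D D' :: "'a::ring mat"
  assumes carrier: "A \<in> carrier_mat n n" "B \<in> carrier_mat n n" "Q \<in> carrier_mat n n"
      "D \<in> carrier_mat n n" "D' \<in> carrier_mat n n"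
    and AQ: "A * Q = Q * B" and DA: "D * A = - (A * D)" and DB: "D' * B = - (B * D')"
  shows "A * (D * Q * D') = (D * Q * D') * B"
proof -
  have AD: "A * D = - (D * A)" and BD: "B * D' = - (D' * B)" using DA DB carrier by simp_all
  have "A * (D * Q * D') = (A * D) * Q * D'"
    using carrier by (simp add: assoc_mult_mat[of _ n n _ n _ n])
  also have "\<dots> = - (D * (A * Q) * D')"
    using carrier by (simp add: AD assoc_mult_mat[of _ n n _ n _ n])
  also have "\<dots> = - (D * Q * (B * D'))"
    using carrier by (simp add: AQ assoc_mult_mat[of _ n n _ n _ n])
  also have "\<dots> = (D * Q * D') * B"
    using carrier by (simp add: BD assoc_mult_mat[of _ n n _ n _ n])
  finally show ?thesis .
qed

text \<open>Count \<open>\<Sum>\<^sub>i\<^sub>,\<^sub>j block_sign p i * Q\<^sub>i\<^sub>j\<^sup>2\<close> once by rows and once by columns.\<close>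

lemma block_sign_count:
  fixes Q :: "'a::field mat"
  assumes Q: "Q \<in> carrier_mat n n" "orthogonal_mat Q" and p: "p \<le> n" "p' \<le> n"
    and ent: "\<And>i j. i < n \<Longrightarrow> j < n \<Longrightarrow> block_sign p i * Q $$ (i,j) * block_sign p' j = s * Q $$ (i,j)"
  shows "of_nat p - of_nat (n - p) = s * (of_nat p' - of_nat (n - p') :: 'a)"
proof -
  have rows: "(\<Sum>j<n. Q $$ (i,j) * Q $$ (i,j)) = 1" if "i < n" for i
    using orthogonal_mat_mult_transpose[OF Q] Q(1) that
    by (auto simp: scalar_prod_def lessThan_atLeast0 dest!: arg_cong[where f = "\<lambda>M. M $$ (i,i)"])
  have cols: "(\<Sum>i<n. Q $$ (i,j) * Q $$ (i,j)) = 1" if "j < n" for j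
    using Q that
    by (auto simp: orthogonal_mat_def scalar_prod_def lessThan_atLeast0 dest!: arg_cong[where f = "\<lambda>M. M $$ (j,j)"])
  have sq: "block_sign p i * (Q $$ (i,j) * Q $$ (i,j)) = s * block_sign p' j * (Q $$ (i,j) * Q $$ (i,j))"
    if "i < n" "j < n" for i j
  proof -
    have "s * block_sign p' j * (Q $$ (i,j) * Q $$ (i,j)) = (s * Q $$ (i,j)) * block_sign p' j * Q $$ (i,j)"
      by (simp add: mult_ac)
    also have "\<dots> = block_sign p i * Q $$ (i,j) * (block_sign p' j * block_sign p' j) * Q $$ (i,j)"
      by (simp only: ent[OF that, symmetric] mult.assoc)
    finally have "s * block_sign p' j * (Q $$ (i,j) * Q $$ (i,j)) = block_sign p i * (Q $$ (i,j) * Q $$ (i,j))"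
      by (simp add: mult.assoc)
    thus ?thesis ..
  qed
  have "(of_nat p - of_nat (n - p) :: 'a) = (\<Sum>i<n. block_sign p i * (\<Sum>j<n. Q $$ (i,j) * Q $$ (i,j)))"
    using p by (simp add: rows sum_block_sign)
  also have "\<dots> = (\<Sum>j<n. s * block_sign p' j * (\<Sum>i<n. Q $$ (i,j) * Q $$ (i,j)))"
  proof -
    have "(\<Sum>i<n. block_sign p i * (\<Sum>j<n. Q $$ (i,j) * Q $$ (i,j)))
        = (\<Sum>i<n. \<Sum>j<n. s * block_sign p' j * (Q $$ (i,j) * Q $$ (i,j)))"
      by (simp add: sum_distrib_left sq)
    also have "\<dots> = (\<Sum>j<n. \<Sum>i<n. s * block_sign p' j * (Q $$ (i,j) * Q $$ (i,j)))"
      by (rule sum.swap)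
    finally show ?thesis by (simp add: sum_distrib_left)
  qed
  also have "\<dots> = s * (of_nat p' - of_nat (n - p'))"
    using p by (simp add: cols sum_block_sign sum_distrib_left[symmetric])
  finally show ?thesis .
qed

lemma block_diagonal_if_block_sign_commute:
  fixes Q :: "'a::field_char_0 mat"
  assumes Q: "Q \<in> carrier_mat (p + q) (p + q)" "orthogonal_mat Q" "regular_mat Q" and p': "p' \<le> p + q"
    and comm: "block_sign_mat p (p + q) * Q * block_sign_mat p' (p + q) = Q"
  shows "p' = p" and "\<exists>Q1 Q2. orthogonal_mat Q1 \<and> regular_mat Q1 \<and> orthogonal_mat Q2 \<and> regular_mat Q2 \<and>
     Q1 \<in> carrier_mat p p \<and> Q2 \<in> carrier_mat q q \<and> Q = four_block_mat Q1 (0\<^sub>m p q) (0\<^sub>m q p) Q2"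
proof -
  have ent: "block_sign p i * Q $$ (i,j) * block_sign p' j = 1 * Q $$ (i,j)"
    if "i < p + q" "j < p + q" for i j
    using arg_cong[OF comm, of "\<lambda>M. M $$ (i,j)"] that by (simp add: block_sign_mat_sandwich[OF Q(1)])
  have "(of_nat p - of_nat q :: 'a) = of_nat p' - of_nat (p + q - p')"
    using block_sign_count[OF Q(1,2) _ p' ent] by simp
  thus "p' = p" using p' by (simp add: of_nat_diff)
  have zero: "Q $$ (i,j) = 0" if "i < p + q" "j < p + q" "(i < p) \<noteq> (j < p)" for i j
    using ent[OF that(1,2)] that(3) \<open>p' = p\<close> by (auto simp: block_sign_def)
  define Q1 where "Q1 = mat p p (\<lambda>(i,j). Q $$ (i, j))"
  define Q2 where "Q2 = mat q q (\<lambda>(i,j). Q $$ (p + i, p + j))"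
  have carrier: "Q1 \<in> carrier_mat p p" "Q2 \<in> carrier_mat q q" by (simp_all add: Q1_def Q2_def)
  have "\<forall>i<p + q. \<forall>j<p + q. (0 \<le> i \<and> i < 0 + p) \<noteq> (0 \<le> j \<and> j < 0 + p) \<longrightarrow> Q $$ (i,j) = 0"
    and "\<forall>i<p + q. \<forall>j<p + q. (p \<le> i \<and> i < p + q) \<noteq> (p \<le> j \<and> j < p + q) \<longrightarrow> Q $$ (i,j) = 0"
    by (intro allI impI zero; auto)+
  from orthogonal_regular_block[OF Q this(1)] orthogonal_regular_block[OF Q this(2)]
  have "orthogonal_mat Q1" "regular_mat Q1" "orthogonal_mat Q2" "regular_mat Q2"
    by (simp_all add: Q1_def Q2_def)
  moreover have "Q = four_block_mat Q1 (0\<^sub>m p q) (0\<^sub>m q p) Q2"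
  proof (rule eq_matI)
    fix i j assume "i < dim_row (four_block_mat Q1 (0\<^sub>m p q) (0\<^sub>m q p) Q2)"
      and "j < dim_col (four_block_mat Q1 (0\<^sub>m p q) (0\<^sub>m q p) Q2)"
    hence "i < p + q" "j < p + q" by (simp_all add: Q1_def Q2_def)
    thus "Q $$ (i,j) = four_block_mat Q1 (0\<^sub>m p q) (0\<^sub>m q p) Q2 $$ (i,j)"
      using zero by (cases "i < p"; cases "j < p") (simp_all add: Q1_def Q2_def)
  qed (use Q(1) in \<open>simp_all add: Q1_def Q2_def\<close>)
  ultimately show "\<exists>Q1 Q2. orthogonal_mat Q1 \<and> regular_mat Q1 \<and> orthogonal_mat Q2 \<and> regular_mat Q2 \<and>
     Q1 \<in> carrier_mat p p \<and> Q2 \<in> carrier_mat q q \<and> Q = four_block_mat Q1 (0\<^sub>m p q) (0\<^sub>m q p) Q2"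
    using carrier by blast
qed

lemma block_antidiagonal_if_block_sign_anticommute:
  fixes Q :: "'a::field_char_0 mat"
  assumes Q: "Q \<in> carrier_mat (p + q) (p + q)" "orthogonal_mat Q" "regular_mat Q" and p': "p' \<le> p + q"
    and anti: "block_sign_mat p (p + q) * Q * block_sign_mat p' (p + q) = - Q"
  shows "p' = q" and "\<exists>Q1 Q2. orthogonal_mat Q1 \<and> regular_mat Q1 \<and> orthogonal_mat Q2 \<and> regular_mat Q2 \<and>
     Q1 \<in> carrier_mat p p \<and> Q2 \<in> carrier_mat q q \<and> Q = four_block_mat (0\<^sub>m p q) Q1 Q2 (0\<^sub>m q p)"
proof -
  have ent: "block_sign p i * Q $$ (i,j) * block_sign p' j = -1 * Q $$ (i,j)"
    if "i < p + q" "j < p + q" for i j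
    using arg_cong[OF anti, of "\<lambda>M. M $$ (i,j)"] that Q(1) by (simp add: block_sign_mat_sandwich[OF Q(1)])
  have "(of_nat p - of_nat q :: 'a) = - (of_nat p' - of_nat (p + q - p'))"
    using block_sign_count[OF Q(1,2) _ p' ent] by simp
  thus "p' = q" using p' by (simp add: of_nat_diff)
  have zero: "Q $$ (i,j) = 0" if "i < p + q" "j < p + q" "(i < p) = (j < q)" for i j
    using ent[OF that(1,2)] that(3) \<open>p' = q\<close> by (auto simp: block_sign_def)
  define Q1 where "Q1 = mat p p (\<lambda>(i,j). Q $$ (i, q + j))"
  define Q2 where "Q2 = mat q q (\<lambda>(i,j). Q $$ (p + i, j))"
  have carrier: "Q1 \<in> carrier_mat p p" "Q2 \<in> carrier_mat q q" by (simp_all add: Q1_def Q2_def)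
  have "\<forall>i<p + q. \<forall>j<p + q. (0 \<le> i \<and> i < 0 + p) \<noteq> (q \<le> j \<and> j < q + p) \<longrightarrow> Q $$ (i,j) = 0"
    and "\<forall>i<p + q. \<forall>j<p + q. (p \<le> i \<and> i < p + q) \<noteq> (0 \<le> j \<and> j < 0 + q) \<longrightarrow> Q $$ (i,j) = 0"
    by (intro allI impI zero; auto)+
  from orthogonal_regular_block[OF Q this(1)] orthogonal_regular_block[OF Q this(2)]
  have "orthogonal_mat Q1" "regular_mat Q1" "orthogonal_mat Q2" "regular_mat Q2"
    by (simp_all add: Q1_def Q2_def)
  moreover have "Q = four_block_mat (0\<^sub>m p q) Q1 Q2 (0\<^sub>m q p)"
  proof (rule eq_matI)
    fix i j assume "i < dim_row (four_block_mat (0\<^sub>m p q) Q1 Q2 (0\<^sub>m q p))"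
      and "j < dim_col (four_block_mat (0\<^sub>m p q) Q1 Q2 (0\<^sub>m q p))"
    hence "i < p + q" "j < p + q" by (simp_all add: Q1_def Q2_def)
    thus "Q $$ (i,j) = four_block_mat (0\<^sub>m p q) Q1 Q2 (0\<^sub>m q p) $$ (i,j)"
      using zero by (cases "i < p"; cases "j < q") (simp_all add: Q1_def Q2_def)
  qed (use Q(1) in \<open>simp_all add: Q1_def Q2_def\<close>)
  ultimately show "\<exists>Q1 Q2. orthogonal_mat Q1 \<and> regular_mat Q1 \<and> orthogonal_mat Q2 \<and> regular_mat Q2 \<and>
     Q1 \<in> carrier_mat p p \<and> Q2 \<in> carrier_mat q q \<and> Q = four_block_mat (0\<^sub>m p q) Q1 Q2 (0\<^sub>m q p)"
    using carrier by blast
qed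

text \<open>The twist of \<open>Q\<close> by the two block sign matrices conjugates \<open>A\<close> to \<open>B\<close> as well, so it is
  \<open>\<plusminus>Q\<close>; either sign forces a block shape.\<close>

lemma signed_bip_adj_intertwiner_blocks:
  fixes Q :: "'a::{field_gcd, field_char_0} mat"
  assumes M: "M \<in> carrier_mat p q" and M': "M' \<in> carrier_mat p' q'" and n: "p + q = p' + q'"
    and irr: "irreducible (char_poly (map_mat of_int (signed_bip_adj p q M) :: 'a mat))"
    and Q: "Q \<in> carrier_mat (p + q) (p + q)" "orthogonal_mat Q" "regular_mat Q"
    and AQ: "map_mat of_int (signed_bip_adj p q M) * Q = Q * map_mat of_int (signed_bip_adj p' q' M')"
  shows "\<exists>Q1 Q2. orthogonal_mat Q1 \<and> regular_mat Q1 \<and> orthogonal_mat Q2 \<and> regular_mat Q2 \<and>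
     ((p = p' \<and> q = q' \<and> Q1 \<in> carrier_mat p p \<and> Q2 \<in> carrier_mat q q \<and>
        Q = four_block_mat Q1 (0\<^sub>m p q) (0\<^sub>m q p) Q2) \<or>
      (p = q' \<and> q = p' \<and> Q1 \<in> carrier_mat p p \<and> Q2 \<in> carrier_mat q q \<and>
        Q = four_block_mat (0\<^sub>m p q) Q1 Q2 (0\<^sub>m q p)))"
proof -
  define A :: "'a mat" where "A = map_mat of_int (signed_bip_adj p q M)"
  define B :: "'a mat" where "B = map_mat of_int (signed_bip_adj p' q' M')"
  have A: "A \<in> carrier_mat (p + q) (p + q)" and B: "B \<in> carrier_mat (p + q) (p + q)"
    using signed_bip_adj_carrier[OF M] signed_bip_adj_carrier[OF M'] n by (simp_all add: A_def B_def)
  have symA: "transpose_mat A = A"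
    using transpose_signed_bip_adj[OF M] by (simp add: A_def map_mat_transpose)
  let ?Q' = "block_sign_mat p (p + q) * Q * block_sign_mat p' (p + q)"
  have "?Q' = Q \<or> ?Q' = - Q"
  proof (rule orthogonal_intertwiner_unique[OF A B symA irr[folded A_def] Q(1,2) AQ[folded A_def B_def]])
    show "?Q' \<in> carrier_mat (p + q) (p + q)" using Q(1) by (meson block_sign_mat_carrier mult_carrier_mat)
    show "orthogonal_mat ?Q'"
      using Q(1,2) orthogonal_block_sign_mat by (intro orthogonal_mat_mult[of _ "p + q"]) auto
    show "A * ?Q' = ?Q' * B"
      using block_sign_mat_anticommute[OF M] block_sign_mat_anticommute[OF M'] n
      by (intro twisted_intertwiner[OF A B Q(1) _ _ AQ[folded A_def B_def]]) (simp_all add: A_def B_def)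
  qed
  moreover have "p' \<le> p + q" using n by simp
  ultimately show ?thesis
    using block_diagonal_if_block_sign_commute[OF Q] block_antidiagonal_if_block_sign_anticommute[OF Q] n
    by (metis add_right_cancel add.commute)
qed

theorem theorem3p1:
  fixes p q p' q' :: nat and M M' :: "int mat"
  assumes "sign_block p q M" and "sign_block p' q' M'"
    and "p + q = p' + q'"
    and "gen_cospectral (signed_bip_adj p q M) (signed_bip_adj p' q' M')"
    and "irreducible (map_poly rat_of_int (char_poly (signed_bip_adj p q M)))"
  shows "\<exists>Q Q1 Q2 :: rat mat.
     orthogonal_mat Q \<and> regular_mat Q \<and>
     transpose_mat Q * map_mat rat_of_int (signed_bip_adj p q M) * Q
       = map_mat rat_of_int (signed_bip_adj p' q' M') \<and>
     orthogonal_mat Q1 \<and> regular_mat Q1 \<and> orthogonal_mat Q2 \<and> regular_mat Q2 \<and>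
     ((p = p' \<and> q = q' \<and> Q1 \<in> carrier_mat p p \<and> Q2 \<in> carrier_mat q q \<and>
        Q = four_block_mat Q1 (0\<^sub>m p q) (0\<^sub>m q p) Q2) \<or>
      (p = q' \<and> q = p' \<and> Q1 \<in> carrier_mat p p \<and> Q2 \<in> carrier_mat q q \<and>
        Q = four_block_mat (0\<^sub>m p q) Q1 Q2 (0\<^sub>m q p)))"
proof -
  have M: "M \<in> carrier_mat p q" and M': "M' \<in> carrier_mat p' q'"
    using assms(1,2) by (simp_all add: sign_block_def)
  let ?A = "signed_bip_adj p q M" and ?B = "signed_bip_adj p' q' M'"
  have int: "?A \<in> carrier_mat (p + q) (p + q)" "?B \<in> carrier_mat (p + q) (p + q)"
    using signed_bip_adj_carrier[OF M] signed_bip_adj_carrier[OF M'] assms(3) by simp_all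
  have cp: "char_poly (map_mat rat_of_int ?A) = map_poly rat_of_int (char_poly ?A)"
    "char_poly (map_mat rat_of_int ?B) = map_poly rat_of_int (char_poly ?B)"
    by (rule of_int_hom.char_poly_hom[OF int(1)], rule of_int_hom.char_poly_hom[OF int(2)])
  obtain Q where Q: "Q \<in> carrier_mat (p + q) (p + q)" "orthogonal_mat Q" "regular_mat Q"
    "map_mat rat_of_int ?A * Q = Q * map_mat rat_of_int ?B"
  proof (rule orthogonal_intertwiner_exists)
    show "transpose_mat (map_mat rat_of_int ?A) = map_mat rat_of_int ?A"
      "transpose_mat (map_mat rat_of_int ?B) = map_mat rat_of_int ?B"
      using transpose_signed_bip_adj[OF M] transpose_signed_bip_adj[OF M'] by (simp_all add: map_mat_transpose)
    show "walk_count (map_mat rat_of_int ?A) k = walk_count (map_mat rat_of_int ?B) k" for k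
      by (rule gen_cospectral_walk_count_eq[OF int assms(4)])
  qed (use int cp assms(4,5) in \<open>simp_all add: gen_cospectral_def\<close>)
  moreover have "transpose_mat Q * map_mat rat_of_int ?A * Q = map_mat rat_of_int ?B"
    using int Q by (intro orthogonal_intertwiner_conj[of _ "p + q"]) simp_all
  moreover note signed_bip_adj_intertwiner_blocks[OF M M' assms(3) assms(5)[folded cp(1)] Q]
  ultimately show ?thesis by blast
qed

end
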